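(* Let $r\in\mathbb N$, $n=mr$, and $\mathbf x=(\mathbf x_1,\dots,\mathbf x_r)\sim\gamma_m^{\otimes r}$ (so $\mathbf x\in\mathcal X^n$), using weighted least squares with weight $w_m$. Let $0<\delta<1$, $S_\delta=\{\lambda_{\min}(\mathbf G^{w_m}(\mathbf x))\ge1-\delta\}$, and assume $\mathbb P(S_\delta)>0$. Then for every $f\in L^2_\mu$, with $\hat f_m=\hat P_{V_m}f$, $$\mathbb E(\|f-\hat f_m\|^2\mid S_\delta)\le\big(1+\mathbb P(S_\delta)^{-1}(1-\delta)^{-1}\big)\inf_{g\in V_m}\|f-g\|^2,$$ $$\mathbb E(\|f-\hat f_m\|^2\mid S_\delta)\le\big(1+\mathbb P(S_\delta)^{-1}(1-\delta)^{-2}r^{-1}\big)\inf_{g\in V_m}\|f-g\|^2.$$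
   Context: $\mathcal X$ is a Polish space with Borel probability measure $\mu$; $\|\cdot\|$ is the $L^2_\mu$ norm. $V_m\subset L^2_\mu$ has $L^2_\mu$-orthonormal basis $\varphi_1,\dots,\varphi_m$, $\boldsymbol\varphi=(\varphi_1,\dots,\varphi_m)^T$, $w_m(x)=\frac1m\|\boldsymbol\varphi(x)\|_2^2$. For points $x_1,\dots,x_n$ and weight $w$: $\|f\|_n^2=\frac1n\sum_iw(x_i)^{-1}f(x_i)^2$, $\mathbf G^w=\frac1n\sum_iw(x_i)^{-1}\boldsymbol\varphi(x_i)\boldsymbol\varphi(x_i)^T$, $\hat P_{V_m}f$ is the unique minimizer over $V_m$ of $\|f-g\|_n$. For $\mathbf x=(x_1,\dots,x_m)$, $\Phi(\mathbf x)$ has rows $\boldsymbol\varphi(x_i)^T$, and $\gamma_m$ is the probability measure on $\mathcal X^m$ with $d\gamma_m(\mathbf x)=\frac1{m!}\det(\Phi(\mathbf x)^T\Phi(\mathbf x))\,d\mu^{\otimes m}(\mathbf x)$ (projection determinantal point process). *)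

theory Defs
  imports "HOL-Probability.Probability" "Jordan_Normal_Form.Char_Poly"
begin

definition wm :: "nat \<Rightarrow> (nat \<Rightarrow> 'a \<Rightarrow> real) \<Rightarrow> 'a \<Rightarrow> real" where
  "wm m \<phi> x = (1 / real m) * (\<Sum>k<m. (\<phi> k x)\<^sup>2)"

definition Vspace :: "nat \<Rightarrow> (nat \<Rightarrow> 'a \<Rightarrow> real) \<Rightarrow> ('a \<Rightarrow> real) set" where
  "Vspace m \<phi> = {g. \<exists>c :: nat \<Rightarrow> real. g = (\<lambda>x. \<Sum>k<m. c k * \<phi> k x)}"

definition PhiMat :: "nat \<Rightarrow> (nat \<Rightarrow> 'a \<Rightarrow> real) \<Rightarrow> (nat \<Rightarrow> 'a) \<Rightarrow> real mat" where
  "PhiMat m \<phi> x = mat m m (\<lambda>(i, k). \<phi> k (x i))"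

definition gammaDPP :: "'a measure \<Rightarrow> nat \<Rightarrow> (nat \<Rightarrow> 'a \<Rightarrow> real) \<Rightarrow> (nat \<Rightarrow> 'a) measure" where
  "gammaDPP M m \<phi> = density (PiM {..<m} (\<lambda>_. M))
     (\<lambda>x. ennreal (Determinant.det (transpose_mat (PhiMat m \<phi> x) * PhiMat m \<phi> x) / fact m))"

text \<open>Sample x = (x_1,...,x_r), x_j in X^m, n = m r points x j i (j<r, i<m).
  Empirical seminorm squared with weight w (inverse of 0 taken as 0, a null event).\<close>
definition emp_norm :: "nat \<Rightarrow> nat \<Rightarrow> ('a \<Rightarrow> real) \<Rightarrow> (nat \<Rightarrow> nat \<Rightarrow> 'a) \<Rightarrow> ('a \<Rightarrow> real) \<Rightarrow> real" where
  "emp_norm m r w x f = sqrt ((1 / real (m * r)) * (\<Sum>j<r. \<Sum>i<m. inverse (w (x j i)) * (f (x j i))\<^sup>2))"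

definition gram :: "nat \<Rightarrow> nat \<Rightarrow> (nat \<Rightarrow> 'a \<Rightarrow> real) \<Rightarrow> ('a \<Rightarrow> real) \<Rightarrow> (nat \<Rightarrow> nat \<Rightarrow> 'a) \<Rightarrow> real mat" where
  "gram m r \<phi> w x = mat m m (\<lambda>(k, l).
     (1 / real (m * r)) * (\<Sum>j<r. \<Sum>i<m. inverse (w (x j i)) * \<phi> k (x j i) * \<phi> l (x j i)))"

definition lambda_min :: "real mat \<Rightarrow> real" where
  "lambda_min A = Min {k. eigenvalue A k}"

definition wls_proj :: "nat \<Rightarrow> nat \<Rightarrow> (nat \<Rightarrow> 'a \<Rightarrow> real) \<Rightarrow> ('a \<Rightarrow> real) \<Rightarrow> (nat \<Rightarrow> nat \<Rightarrow> 'a) \<Rightarrow> ('a \<Rightarrow> real) \<Rightarrow> ('a \<Rightarrow> real)" where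
  "wls_proj m r \<phi> w x f = (THE g. g \<in> Vspace m \<phi> \<and>
     (\<forall>h \<in> Vspace m \<phi>. emp_norm m r w x (\<lambda>y. f y - g y) \<le> emp_norm m r w x (\<lambda>y. f y - h y)))"

end

theory Submission
  imports Defs
begin

(* On the event where the weighted Gram matrix satisfies G >= c I (c = 1 - delta), the normal
   equations G d = b, with b_k the empirical inner products of the residual f - P f with phi_k,
   have a solution, and the weighted least-squares projection is P f + sum_k d_k phi_k. By
   Pythagoras in L2 its error is ||f - P f||^2 + |d|^2, and positivity of G gives both
   |d|^2 <= ||f - P f||_n^2 / c and |d|^2 <= |b|^2 / c^2.
   Under the projection DPP each point has marginal density m w_m, so the expected empirical
   norm of the residual is at most its L2 norm. The vector b averages r independent blocks with
   mean zero, and the two-point correlation of the DPP is negative, so E |b|^2 <= ||f - P f||^2 / r.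
   Integrating over the event and dividing by its probability gives the two bounds. *)

lemma abs_mult_le_sum_squares: "\<bar>a * b\<bar> \<le> a\<^sup>2 + (b::real)\<^sup>2"
proof -
  have "2 * \<bar>a\<bar> * \<bar>b\<bar> \<le> a\<^sup>2 + b\<^sup>2" using sum_squares_bound[of "\<bar>a\<bar>" "\<bar>b\<bar>"] by simp
  moreover have "0 \<le> \<bar>a\<bar> * \<bar>b\<bar>" by simp
  ultimately show ?thesis unfolding abs_mult by linarith
qed

lemma quadratic_nonneg_imp_discriminant_le:
  fixes A B C :: real
  assumes nonneg: "\<And>t. 0 \<le> A + 2 * t * B + t\<^sup>2 * C" and C: "C \<ge> 0"
  shows "B\<^sup>2 \<le> A * C"
proof (cases "C = 0")
  case True
  have "B = 0"
  proof (rule ccontr)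
    assume "B \<noteq> 0"
    then show False
      using nonneg[of "- (A + 1) / (2 * B)"] True by (simp add: field_simps)
  qed
  then show ?thesis using True by simp
next
  case False
  with C have "C > 0" by simp
  have "0 \<le> A + 2 * (- B / C) * B + (- B / C)\<^sup>2 * C" by (rule nonneg)
  also have "\<dots> = (A * C - B\<^sup>2) / C"
    using \<open>C > 0\<close> by (simp add: field_simps power2_eq_square)
  finally show ?thesis using \<open>C > 0\<close> by (simp add: zero_le_divide_iff)
qed

lemma prod_if_one_zero:
  assumes "finite A"
  shows "(\<Prod>i\<in>A. if P i then 1 else (0::real)) = (if \<forall>i\<in>A. P i then 1 else 0)"
  using assms by (induction A rule: finite_induct) auto

lemma permutes_lessThan_less: "\<sigma> permutes {..<n} \<Longrightarrow> i < n \<Longrightarrow> \<sigma> i < (n::nat)"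
  using permutes_in_image[of \<sigma> "{..<n}" i] by simp

lemma sign_mult_self: "real_of_int (sign \<sigma>) * real_of_int (sign \<sigma>) = 1"
  by (simp add: sign_def)

lemma permutes_eq_iff_agree:
  assumes "\<sigma> permutes A" and "\<tau> permutes A"
  shows "(\<forall>i\<in>A. \<sigma> i = \<tau> i) \<longleftrightarrow> \<tau> = \<sigma>"
proof
  assume agree: "\<forall>i\<in>A. \<sigma> i = \<tau> i"
  show "\<tau> = \<sigma>"
  proof
    fix x show "\<tau> x = \<sigma> x"
      using agree permutes_not_in[OF assms(1), of x] permutes_not_in[OF assms(2), of x] by (cases "x \<in> A") auto
  qed
qed auto

lemma permutes_eq_if_agree_off_point:
  assumes s: "\<sigma> permutes A" and t: "\<tau> permutes A" and p: "p \<in> A"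
    and agree: "\<And>i. i \<in> A \<Longrightarrow> i \<noteq> p \<Longrightarrow> \<sigma> i = \<tau> i"
  shows "\<tau> = \<sigma>"
proof -
  have "\<tau> p \<in> A" using t p by (simp add: permutes_in_image)
  then obtain i where i: "i \<in> A" "\<tau> p = \<sigma> i"
    using permutes_image[OF s] by (metis imageE)
  have "i = p"
  proof (rule ccontr)
    assume "i \<noteq> p"
    then have "\<tau> p = \<tau> i" using agree i by auto
    then show False using \<open>i \<noteq> p\<close> permutes_inj[OF t] by (metis injD)
  qed
  then have "\<tau> p = \<sigma> p" using i by simp
  then have "\<forall>i\<in>A. \<sigma> i = \<tau> i" using agree by (metis (full_types))
  then show ?thesis using permutes_eq_iff_agree[OF s t] by simp
qed

lemma permutes_agree_off_pair:
  assumes s: "\<sigma> permutes A" and t: "\<tau> permutes A" and p: "p \<in> A" and q: "q \<in> A"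
    and pq: "p \<noteq> q" and agree: "\<And>i. i \<in> A \<Longrightarrow> i \<noteq> p \<Longrightarrow> i \<noteq> q \<Longrightarrow> \<sigma> i = \<tau> i"
  shows "\<tau> = \<sigma> \<or> \<tau> = \<sigma> \<circ> Transposition.transpose p q"
proof -
  have inj: "\<tau> a = \<tau> b \<Longrightarrow> a = b" for a b using permutes_inj[OF t] by (metis injD)
  have image: "\<tau> y \<in> {\<sigma> p, \<sigma> q}" if y: "y \<in> {p, q}" for y
  proof -
    have "\<tau> y \<in> A" using t y p q by (auto simp add: permutes_in_image)
    then obtain i where i: "i \<in> A" "\<tau> y = \<sigma> i"
      using permutes_image[OF s] by (metis imageE)
    have "i = p \<or> i = q"
    proof (rule ccontr)
      assume "\<not> (i = p \<or> i = q)"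
      then have "\<tau> y = \<tau> i" using agree i by auto
      then show False using \<open>\<not> (i = p \<or> i = q)\<close> y inj by blast
    qed
    then show ?thesis using i by auto
  qed
  have outside: "\<sigma> x = \<tau> x" if "x \<noteq> p" "x \<noteq> q" for x
    using agree that permutes_not_in[OF s] permutes_not_in[OF t] by (cases "x \<in> A") auto
  show ?thesis
  proof (cases "\<tau> p = \<sigma> p")
    case True
    then have "\<tau> q = \<sigma> q" using image[of q] inj pq by auto
    then have "\<tau> = \<sigma>" using True outside by (intro ext) metis
    then show ?thesis by simp
  next
    case False
    then have pq': "\<tau> p = \<sigma> q" using image[of p] by auto
    then have "\<tau> q = \<sigma> p" using image[of q] inj pq by auto
    then have "\<tau> = \<sigma> \<circ> Transposition.transpose p q"
      using pq' outside by (intro ext) (auto simp: Transposition.transpose_def)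
    then show ?thesis by simp
  qed
qed

section \<open>Integrals over finite products of a probability space\<close>

lemma product_sigma_finite_prob_space: "prob_space N \<Longrightarrow> product_sigma_finite (\<lambda>_::'i. N)"
  unfolding product_sigma_finite_def using prob_space_imp_sigma_finite by blast

lemma PiM_integral_prod_components:
  fixes F :: "'a \<Rightarrow> real"
  assumes N: "prob_space N" and I: "finite I" and J: "J \<subseteq> I" and F: "integrable N F"
  shows "integrable (PiM I (\<lambda>_. N)) (\<lambda>x. \<Prod>j\<in>J. F (x j))"
    and "(\<integral>x. (\<Prod>j\<in>J. F (x j)) \<partial>PiM I (\<lambda>_. N)) = (\<integral>y. F y \<partial>N) ^ card J"
proof -
  define G where "G = (\<lambda>l x. if l \<in> J then F x else 1)"
  have "integrable N (\<lambda>_. 1::real)"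
    using finite_measure.integrable_const[OF prob_space.axioms(1)[OF N]] .
  then have "integrable N (G l)" for l
    using F by (cases "l \<in> J") (simp_all add: G_def)
  note psf = product_sigma_finite.product_integrable_prod[OF product_sigma_finite_prob_space[OF N] I, of G]
    product_sigma_finite.product_integral_prod[OF product_sigma_finite_prob_space[OF N] I, of G]
  have restrict: "(\<Prod>l\<in>I. if l \<in> J then c l else 1) = (\<Prod>j\<in>J. c j)" for c :: "_ \<Rightarrow> real"
    using I J by (simp add: prod.If_cases Int_absorb1)
  have "(\<Prod>l\<in>I. G l (x l)) = (\<Prod>j\<in>J. F (x j))" for x
    using restrict[of "\<lambda>l. F (x l)"] by (simp add: G_def)
  moreover have "(\<Prod>l\<in>I. integral\<^sup>L N (G l)) = (\<integral>y. F y \<partial>N) ^ card J"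
  proof -
    have "integral\<^sup>L N (G l) = (if l \<in> J then integral\<^sup>L N F else 1)" for l
      using prob_space.prob_space[OF N] by (simp add: G_def)
    then show ?thesis using restrict[of "\<lambda>_. integral\<^sup>L N F"] J I by (simp add: finite_subset)
  qed
  ultimately show "integrable (PiM I (\<lambda>_. N)) (\<lambda>x. \<Prod>j\<in>J. F (x j))"
    and "(\<integral>x. (\<Prod>j\<in>J. F (x j)) \<partial>PiM I (\<lambda>_. N)) = (\<integral>y. F y \<partial>N) ^ card J"
    using psf \<open>\<And>l. integrable N (G l)\<close> by simp_all
qed

lemma PiM_integral_sq_sum_centered:
  fixes Y :: "'a \<Rightarrow> real" and r :: nat
  assumes N: "prob_space N" and Y: "integrable N Y" and Y2: "integrable N (\<lambda>y. (Y y)\<^sup>2)"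
    and centered: "(\<integral>y. Y y \<partial>N) = 0"
  shows "integrable (PiM {..<r} (\<lambda>_. N)) (\<lambda>x. (\<Sum>j<r. Y (x j))\<^sup>2)"
    and "(\<integral>x. (\<Sum>j<r. Y (x j))\<^sup>2 \<partial>PiM {..<r} (\<lambda>_. N)) = real r * (\<integral>y. (Y y)\<^sup>2 \<partial>N)"
proof -
  let ?P = "PiM {..<r} (\<lambda>_. N)"
  have split: "(\<Sum>j<r. Y (x j))\<^sup>2 = (\<Sum>j<r. (Y (x j))\<^sup>2) + (\<Sum>j<r. \<Sum>j'\<in>{..<r} - {j}. Y (x j) * Y (x j'))" for x
    by (simp add: power2_eq_square sum_product sum.remove[of "{..<r}"] sum.distrib)
  have diag: "integrable ?P (\<lambda>x. (Y (x j))\<^sup>2)" "(\<integral>x. (Y (x j))\<^sup>2 \<partial>?P) = (\<integral>y. (Y y)\<^sup>2 \<partial>N)"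
    if "j < r" for j
    using PiM_integral_prod_components[OF N _ _ Y2, of "{..<r}" "{j}"] that by simp_all
  have off_diag: "integrable ?P (\<lambda>x. Y (x j) * Y (x j'))" "(\<integral>x. Y (x j) * Y (x j') \<partial>?P) = 0"
    if "j < r" "j' \<in> {..<r} - {j}" for j j'
    using PiM_integral_prod_components[OF N _ _ Y, of "{..<r}" "{j, j'}"] that centered by auto
  have diag_sum: "integrable ?P (\<lambda>x. \<Sum>j<r. (Y (x j))\<^sup>2)"
    "(\<integral>x. (\<Sum>j<r. (Y (x j))\<^sup>2) \<partial>?P) = real r * (\<integral>y. (Y y)\<^sup>2 \<partial>N)"
    using diag by (auto intro!: Bochner_Integration.integrable_sum simp: Bochner_Integration.integral_sum[of "{..<r}"])
  have off_diag_sum: "integrable ?P (\<lambda>x. \<Sum>j<r. \<Sum>j'\<in>{..<r} - {j}. Y (x j) * Y (x j'))"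
    "(\<integral>x. (\<Sum>j<r. \<Sum>j'\<in>{..<r} - {j}. Y (x j) * Y (x j')) \<partial>?P) = 0"
  proof -
    have row: "integrable ?P (\<lambda>x. \<Sum>j'\<in>{..<r} - {j}. Y (x j) * Y (x j'))"
      "(\<integral>x. (\<Sum>j'\<in>{..<r} - {j}. Y (x j) * Y (x j')) \<partial>?P) = 0" if "j < r" for j
      using off_diag that by (auto intro!: Bochner_Integration.integrable_sum simp: Bochner_Integration.integral_sum)
    then show "integrable ?P (\<lambda>x. \<Sum>j<r. \<Sum>j'\<in>{..<r} - {j}. Y (x j) * Y (x j'))"
      "(\<integral>x. (\<Sum>j<r. \<Sum>j'\<in>{..<r} - {j}. Y (x j) * Y (x j')) \<partial>?P) = 0"
      by (auto intro: Bochner_Integration.integrable_sum simp: Bochner_Integration.integral_sum[of "{..<r}"])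
  qed
  show "integrable ?P (\<lambda>x. (\<Sum>j<r. Y (x j))\<^sup>2)"
    unfolding split using diag_sum off_diag_sum by simp
  show "(\<integral>x. (\<Sum>j<r. Y (x j))\<^sup>2 \<partial>?P) = real r * (\<integral>y. (Y y)\<^sup>2 \<partial>N)"
    unfolding split using diag_sum off_diag_sum by simp
qed

section \<open>Quadratic forms of symmetric matrices\<close>

definition qform :: "real mat \<Rightarrow> nat \<Rightarrow> (nat \<Rightarrow> real) \<Rightarrow> real" where
  "qform A n v = (\<Sum>k<n. \<Sum>l<n. v k * A $$ (k, l) * v l)"

definition sqnorm :: "nat \<Rightarrow> (nat \<Rightarrow> real) \<Rightarrow> real" where
  "sqnorm n v = (\<Sum>k<n. (v k)\<^sup>2)"

lemma sqnorm_nonneg: "sqnorm n v \<ge> 0"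
  unfolding sqnorm_def by (simp add: sum_nonneg)

lemma sqnorm_eq_0_iff: "sqnorm n v = 0 \<longleftrightarrow> (\<forall>k<n. v k = 0)"
  unfolding sqnorm_def by (subst sum_nonneg_eq_0_iff) auto

lemma qform_scale: "qform A n (\<lambda>k. s * v k) = s\<^sup>2 * qform A n v"
  unfolding qform_def by (simp add: sum_distrib_left power2_eq_square mult_ac)

lemma sqnorm_scale: "sqnorm n (\<lambda>k. s * v k) = s\<^sup>2 * sqnorm n v"
  unfolding sqnorm_def by (simp add: sum_distrib_left power_mult_distrib)

lemma qform_add_scaled:
  assumes sym: "\<And>k l. k < n \<Longrightarrow> l < n \<Longrightarrow> A $$ (k, l) = A $$ (l, k)"
  shows "qform A n (\<lambda>k. v k + t * u k) =
    qform A n v + 2 * t * (\<Sum>k<n. u k * (\<Sum>l<n. A $$ (k, l) * v l)) + t\<^sup>2 * qform A n u"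
proof -
  have swap: "(\<Sum>k<n. \<Sum>l<n. v k * A $$ (k, l) * u l) = (\<Sum>k<n. \<Sum>l<n. u k * A $$ (k, l) * v l)"
    by (subst sum.swap) (use sym in \<open>auto intro!: sum.cong simp: mult_ac\<close>)
  have "qform A n (\<lambda>k. v k + t * u k) = qform A n v + t * (\<Sum>k<n. \<Sum>l<n. u k * A $$ (k, l) * v l)
      + t * (\<Sum>k<n. \<Sum>l<n. v k * A $$ (k, l) * u l) + t\<^sup>2 * qform A n u"
    unfolding qform_def by (simp add: algebra_simps power2_eq_square sum.distrib sum_distrib_left)
  then show ?thesis
    unfolding swap by (simp add: sum_distrib_left mult_ac)
qed

lemma sqnorm_add_scaled:
  "sqnorm n (\<lambda>k. v k + t * u k) = sqnorm n v + 2 * t * (\<Sum>k<n. u k * v k) + t\<^sup>2 * sqnorm n u"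
  unfolding sqnorm_def by (simp add: power2_eq_square algebra_simps sum.distrib sum_distrib_left)

lemma continuous_map_qform:
  "continuous_map (product_topology (\<lambda>_. euclideanreal) {..<n}) euclideanreal (qform A n)"
  unfolding qform_def
  by (intro continuous_map_sum continuous_map_real_mult continuous_map_const[THEN iffD2]
      continuous_map_product_projection) auto

lemma continuous_map_sqnorm:
  "continuous_map (product_topology (\<lambda>_. euclideanreal) {..<n}) euclideanreal (sqnorm n)"
  unfolding sqnorm_def power2_eq_square
  by (intro continuous_map_sum continuous_map_real_mult continuous_map_product_projection) auto

lemma qform_restrict: "qform A n (restrict v {..<n}) = qform A n v"
  unfolding qform_def by (intro sum.cong refl) auto

lemma sqnorm_restrict: "sqnorm n (restrict v {..<n}) = sqnorm n v"
  unfolding sqnorm_def by (intro sum.cong refl) auto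

lemma compactin_unit_sphere:
  "compactin (product_topology (\<lambda>_. euclideanreal) {..<n})
     {v \<in> topspace (product_topology (\<lambda>_. euclideanreal) {..<n}). sqnorm n v = 1}"
  (is "compactin ?X ?S")
proof -
  have closed: "closedin ?X ?S"
    using closedin_continuous_map_preimage[OF continuous_map_sqnorm, of "{1}"] by simp
  have cube: "compactin ?X (PiE {..<n} (\<lambda>_. {-1..1::real}))"
    unfolding compactin_PiE by (simp add: compact_Icc)
  have "?S \<subseteq> PiE {..<n} (\<lambda>_. {-1..1})"
  proof
    fix v assume v: "v \<in> ?S"
    have "(v k)\<^sup>2 \<le> 1" if "k < n" for k
      using v that member_le_sum[of k "{..<n}" "\<lambda>k. (v k)\<^sup>2"] by (simp add: sqnorm_def)
    then have "\<bar>v k\<bar> \<le> 1" if "k < n" for k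
      using that abs_square_le_1 by blast
    then show "v \<in> PiE {..<n} (\<lambda>_. {-1..1})"
      using v by (auto simp: abs_le_iff)
  qed
  then show ?thesis
    using closed_Int_compactin[OF closed cube] by (simp add: Int_absorb2)
qed

lemma qform_min_on_unit_sphere:
  assumes "n > 0"
  obtains v0 where "sqnorm n v0 = 1" and "\<And>v. qform A n v0 * sqnorm n v \<le> qform A n v"
proof -
  let ?X = "product_topology (\<lambda>_. euclideanreal) {..<n}"
  let ?S = "{v \<in> topspace ?X. sqnorm n v = 1}"
  have "sqnorm n (\<lambda>k. if k = 0 then 1 else 0) = (\<Sum>k<n. if k = 0 then 1 else 0)"
    unfolding sqnorm_def by (intro sum.cong) auto
  then have "restrict (\<lambda>k. if k = 0 then 1 else 0) {..<n} \<in> ?S"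
    using assms by (simp add: sqnorm_restrict)
  then have "compact (qform A n ` ?S)" "qform A n ` ?S \<noteq> {}"
    using image_compactin[OF compactin_unit_sphere continuous_map_qform] compactin_euclidean_iff
    by blast+
  then obtain q where "q \<in> qform A n ` ?S" and "\<forall>y \<in> qform A n ` ?S. q \<le> y"
    using compact_attains_inf by blast
  then obtain v0 where v0: "v0 \<in> ?S" and min: "\<And>v. v \<in> ?S \<Longrightarrow> qform A n v0 \<le> qform A n v"
    by blast
  have "qform A n v0 * sqnorm n v \<le> qform A n v" for v
  proof (cases "sqnorm n v = 0")
    case True
    then show ?thesis using sqnorm_eq_0_iff[of n v] by (simp add: qform_def)
  next
    case False
    define s where "s = sqrt (sqnorm n v)"
    have s: "s > 0" "s\<^sup>2 = sqnorm n v" using False sqnorm_nonneg[of n v] by (auto simp: s_def)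
    define u where "u = restrict (\<lambda>k. inverse s * v k) {..<n}"
    have "sqnorm n u = 1" using s False by (simp add: u_def sqnorm_restrict sqnorm_scale power_inverse)
    then have "qform A n v0 \<le> qform A n u" using min by (simp add: u_def)
    also have "qform A n u = qform A n v / s\<^sup>2"
      by (simp add: u_def qform_restrict qform_scale power_inverse divide_inverse_commute)
    finally have "qform A n v0 * s\<^sup>2 \<le> qform A n v" using s(1) by (simp add: le_divide_eq)
    then show ?thesis using s(2) by simp
  qed
  then show thesis using that v0 by blast
qed

lemma mult_mat_vec_index_sum:
  "A \<in> carrier_mat n n \<Longrightarrow> v \<in> carrier_vec n \<Longrightarrow> k < n \<Longrightarrow> (A *\<^sub>v v) $ k = (\<Sum>l<n. A $$ (k, l) * v $ l)"
  by (simp add: mult_mat_vec_def scalar_prod_def lessThan_atLeast0 row_def)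

lemma qform_min_is_eigenvalue:
  assumes A: "A \<in> carrier_mat n n"
    and sym: "\<And>k l. k < n \<Longrightarrow> l < n \<Longrightarrow> A $$ (k, l) = A $$ (l, k)"
    and v0: "sqnorm n v0 = 1" and min: "\<And>v. qform A n v0 * sqnorm n v \<le> qform A n v"
  shows "eigenvalue A (qform A n v0)"
proof -
  define \<mu> where "\<mu> = qform A n v0"
  define w where "w k = (\<Sum>l<n. A $$ (k, l) * v0 l) - \<mu> * v0 k" for k
  \<comment> \<open>v0 minimises the Rayleigh quotient, so the first variation in direction w vanishes\<close>
  have "(\<Sum>k<n. w k * w k)\<^sup>2 \<le> 0 * (qform A n w - \<mu> * sqnorm n w)"
  proof (rule quadratic_nonneg_imp_discriminant_le)
    show "0 \<le> qform A n w - \<mu> * sqnorm n w" using min[of w] by (simp add: \<mu>_def)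
    fix t :: real
    have "qform A n (\<lambda>k. v0 k + t * w k) - \<mu> * sqnorm n (\<lambda>k. v0 k + t * w k)
        = (qform A n v0 - \<mu> * sqnorm n v0)
          + 2 * t * ((\<Sum>k<n. w k * (\<Sum>l<n. A $$ (k, l) * v0 l)) - \<mu> * (\<Sum>k<n. w k * v0 k))
          + t\<^sup>2 * (qform A n w - \<mu> * sqnorm n w)"
      using qform_add_scaled[OF sym, where v=v0 and t=t and u=w] sqnorm_add_scaled[of n v0 t w]
      by (simp add: algebra_simps)
    also have "qform A n v0 - \<mu> * sqnorm n v0 = 0" using v0 by (simp add: \<mu>_def)
    also have "(\<Sum>k<n. w k * (\<Sum>l<n. A $$ (k, l) * v0 l)) - \<mu> * (\<Sum>k<n. w k * v0 k) = (\<Sum>k<n. w k * w k)"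
      by (simp add: w_def right_diff_distrib sum_subtractf sum_distrib_left mult.left_commute)
    finally show "0 \<le> 0 + 2 * t * (\<Sum>k<n. w k * w k) + t\<^sup>2 * (qform A n w - \<mu> * sqnorm n w)"
      using min[of "\<lambda>k. v0 k + t * w k"] by (simp add: \<mu>_def)
  qed
  then have "(\<Sum>k<n. w k * w k) = 0" by simp
  then have "\<forall>k<n. w k = 0"
    using sqnorm_eq_0_iff[of n w] by (simp add: sqnorm_def power2_eq_square)
  then have "A *\<^sub>v vec n v0 = \<mu> \<cdot>\<^sub>v vec n v0"
    using A by (intro eq_vecI) (auto simp: w_def mult_mat_vec_def scalar_prod_def lessThan_atLeast0 row_def)
  moreover have "vec n v0 \<noteq> 0\<^sub>v n"
  proof
    assume zero: "vec n v0 = 0\<^sub>v n"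
    have "v0 k = 0" if "k < n" for k
      using that arg_cong[OF zero, of "\<lambda>u. u $ k"] by simp
    then show False using v0 sqnorm_eq_0_iff[of n v0] by simp
  qed
  ultimately show ?thesis
    using A unfolding eigenvalue_def eigenvector_def \<mu>_def by (intro exI[of _ "vec n v0"]) auto
qed

lemma qform_ge_if_eigenvalues_ge:
  assumes A: "A \<in> carrier_mat n n"
    and sym: "\<And>k l. k < n \<Longrightarrow> l < n \<Longrightarrow> A $$ (k, l) = A $$ (l, k)"
    and eig: "\<And>\<mu>. eigenvalue A \<mu> \<Longrightarrow> \<mu> \<ge> c"
  shows "qform A n v \<ge> c * sqnorm n v"
proof (cases "n = 0")
  case True
  then show ?thesis by (simp add: qform_def sqnorm_def)
next
  case False
  then obtain v0 where v0: "sqnorm n v0 = 1" and min: "\<And>v. qform A n v0 * sqnorm n v \<le> qform A n v"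
    using qform_min_on_unit_sphere[of n A] by auto
  have "c * sqnorm n v \<le> qform A n v0 * sqnorm n v"
    using eig[OF qform_min_is_eigenvalue[OF A sym v0 min]] sqnorm_nonneg by (simp add: mult_right_mono)
  then show ?thesis using min[of v] by simp
qed

lemma qform_pos_imp_det_nonzero:
  assumes A: "A \<in> carrier_mat n n" and c: "c > 0"
    and pos: "\<And>v. qform A n v \<ge> c * sqnorm n v"
  shows "Determinant.det A \<noteq> 0"
proof
  assume "Determinant.det A = 0"
  then obtain v where v: "v \<in> carrier_vec n" "v \<noteq> 0\<^sub>v n" "A *\<^sub>v v = 0\<^sub>v n"
    using det_0_iff_vec_prod_zero[OF A] by auto
  have "(\<Sum>l<n. A $$ (k, l) * v $ l) = 0" if "k < n" for k
    using mult_mat_vec_index_sum[OF A v(1) that] v(3) that by simp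
  then have "qform A n (\<lambda>k. v $ k) = 0"
    unfolding qform_def by (simp add: mult.assoc sum_distrib_left[symmetric])
  moreover have "sqnorm n (\<lambda>k. v $ k) > 0"
  proof -
    obtain k where "k < n" "v $ k \<noteq> 0"
      using v by (metis carrier_vecD eq_vecI index_zero_vec(1) index_zero_vec(2))
    then show ?thesis
      using sqnorm_eq_0_iff[of n "\<lambda>k. v $ k"] sqnorm_nonneg[of n "\<lambda>k. v $ k"] by force
  qed
  ultimately show False
    using pos[of "\<lambda>k. v $ k"] mult_pos_pos[OF c, of "sqnorm n (\<lambda>k. v $ k)"] by linarith
qed

lemma qform_pos_imp_solvable:
  assumes A: "A \<in> carrier_mat n n" and c: "c > 0"
    and pos: "\<And>v. qform A n v \<ge> c * sqnorm n v"
  obtains d where "\<And>k. k < n \<Longrightarrow> (\<Sum>l<n. A $$ (k, l) * d l) = b k"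
proof -
  obtain B where B: "B \<in> carrier_mat n n" "A * B = 1\<^sub>m n"
    using det_non_zero_imp_unit[OF A qform_pos_imp_det_nonzero[OF A c pos]]
    unfolding Units_def ring_mat_def by auto
  have "A *\<^sub>v (B *\<^sub>v vec n b) = vec n b"
    using A B by (simp add: assoc_mult_mat_vec[symmetric, of A n n B n "vec n b"])
  then have "(\<Sum>l<n. A $$ (k, l) * (B *\<^sub>v vec n b) $ l) = b k" if "k < n" for k
    using mult_mat_vec_index_sum[OF A _ that, of "B *\<^sub>v vec n b"] B that by simp
  then show thesis using that by blast
qed

lemma finite_eigenvalues: "(A :: real mat) \<in> carrier_mat n n \<Longrightarrow> finite {\<mu>. eigenvalue A \<mu>}"
proof -
  assume A: "A \<in> carrier_mat n n"
  have "char_poly A \<noteq> 0"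
    using degree_monic_char_poly[OF A] by (metis coeff_0 zero_neq_one)
  then show ?thesis
    using eigenvalue_root_char_poly[OF A] poly_roots_finite by simp
qed

lemma lambda_min_le_eigenvalue:
  "(A :: real mat) \<in> carrier_mat n n \<Longrightarrow> eigenvalue A \<mu> \<Longrightarrow> lambda_min A \<le> \<mu>"
  unfolding lambda_min_def using finite_eigenvalues by (intro Min_le) auto

section \<open>Moments of the projection determinantal point process\<close>

locale orthonormal_system =
  fixes M :: "'a measure" and \<phi> :: "nat \<Rightarrow> 'a \<Rightarrow> real" and m :: nat
  assumes prob_space_M: "prob_space M"
    and \<phi>_measurable: "\<And>k. k < m \<Longrightarrow> \<phi> k \<in> borel_measurable M"
    and \<phi>_square_integrable: "\<And>k. k < m \<Longrightarrow> integrable M (\<lambda>x. (\<phi> k x)\<^sup>2)"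
    and \<phi>_orthonormal: "\<And>k l. k < m \<Longrightarrow> l < m \<Longrightarrow>
                  (\<integral>x. \<phi> k x * \<phi> l x \<partial>M) = (if k = l then 1 else 0)"
begin

abbreviation PM where "PM \<equiv> PiM {..<m} (\<lambda>_. M)"

definition det_phi :: "(nat \<Rightarrow> 'a) \<Rightarrow> real" where
  "det_phi x = (\<Sum>\<sigma> | \<sigma> permutes {..<m}. real_of_int (sign \<sigma>) * (\<Prod>i<m. \<phi> (\<sigma> i) (x i)))"

lemma det_PhiMat: "Determinant.det (PhiMat m \<phi> x) = det_phi x"
proof -
  have "Determinant.det (PhiMat m \<phi> x) = (\<Sum>p | p permutes {0..<m}.
        of_int (sign p) * (\<Prod>i = 0..<m. PhiMat m \<phi> x $$ (i, p i)))"
    by (simp add: det_def PhiMat_def)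
  also have "\<dots> = det_phi x" unfolding det_phi_def lessThan_atLeast0[symmetric]
  proof (intro sum.cong refl arg_cong2[where f="(*)"] prod.cong)
    fix p i assume "p \<in> {p. p permutes {..<m}}" "i \<in> {..<m}"
    then show "PhiMat m \<phi> x $$ (i, p i) = \<phi> (p i) (x i)"
      by (simp add: PhiMat_def permutes_lessThan_less)
  qed
  finally show ?thesis .
qed

lemma det_gram_PhiMat:
  "Determinant.det (transpose_mat (PhiMat m \<phi> x) * PhiMat m \<phi> x) = (det_phi x)\<^sup>2"
proof -
  have "PhiMat m \<phi> x \<in> carrier_mat m m" by (simp add: PhiMat_def)
  then show ?thesis by (simp add: det_mult[of _ m] det_transpose det_PhiMat power2_eq_square)
qed

lemma integrable_\<phi>_mult: "a < m \<Longrightarrow> c < m \<Longrightarrow> integrable M (\<lambda>y. \<phi> a y * \<phi> c y)"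
proof -
  assume a: "a < m" and c: "c < m"
  have "integrable M (\<lambda>y. (\<phi> a y)\<^sup>2 + (\<phi> c y)\<^sup>2)"
    using \<phi>_square_integrable[OF a] \<phi>_square_integrable[OF c] by simp
  then show ?thesis
  proof (rule Bochner_Integration.integrable_bound)
    show "(\<lambda>y. \<phi> a y * \<phi> c y) \<in> borel_measurable M"
      using \<phi>_measurable[OF a] \<phi>_measurable[OF c] by simp
    show "AE y in M. norm (\<phi> a y * \<phi> c y) \<le> norm ((\<phi> a y)\<^sup>2 + (\<phi> c y)\<^sup>2)"
      using abs_mult_le_sum_squares by (auto intro!: AE_I2)
  qed
qed

lemma prod_times_det_phi_sq:
  "(\<Prod>i<m. h i (x i)) * (det_phi x)\<^sup>2 =
   (\<Sum>\<sigma> | \<sigma> permutes {..<m}. \<Sum>\<tau> | \<tau> permutes {..<m}. real_of_int (sign \<sigma> * sign \<tau>) *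
        (\<Prod>i<m. h i (x i) * \<phi> (\<sigma> i) (x i) * \<phi> (\<tau> i) (x i)))"
proof -
  have "(\<Prod>i<m. h i (x i)) * (det_phi x)\<^sup>2 = (\<Sum>\<sigma> | \<sigma> permutes {..<m}. \<Sum>\<tau> | \<tau> permutes {..<m}.
     (\<Prod>i<m. h i (x i)) * ((real_of_int (sign \<sigma>) * (\<Prod>i<m. \<phi> (\<sigma> i) (x i))) *
       (real_of_int (sign \<tau>) * (\<Prod>i<m. \<phi> (\<tau> i) (x i)))))"
    unfolding power2_eq_square det_phi_def sum_product[symmetric] sum_distrib_left[symmetric]
    by (simp only: sum_distrib_right)
  also have "\<dots> = (\<Sum>\<sigma> | \<sigma> permutes {..<m}. \<Sum>\<tau> | \<tau> permutes {..<m}. real_of_int (sign \<sigma> * sign \<tau>) *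
        (\<Prod>i<m. h i (x i) * \<phi> (\<sigma> i) (x i) * \<phi> (\<tau> i) (x i)))"
    by (intro sum.cong refl) (simp add: prod.distrib mult_ac)
  finally show ?thesis .
qed

text \<open>Andreief's identity: the Leibniz expansion of the squared determinant factorises over the points.\<close>

lemma integral_prod_times_det_phi_sq:
  assumes int: "\<And>i a c. i < m \<Longrightarrow> a < m \<Longrightarrow> c < m \<Longrightarrow> integrable M (\<lambda>y. h i y * \<phi> a y * \<phi> c y)"
  shows "integrable PM (\<lambda>x. (\<Prod>i<m. h i (x i)) * (det_phi x)\<^sup>2)"
    and "(\<integral>x. (\<Prod>i<m. h i (x i)) * (det_phi x)\<^sup>2 \<partial>PM) =
      (\<Sum>\<sigma> | \<sigma> permutes {..<m}. \<Sum>\<tau> | \<tau> permutes {..<m}. real_of_int (sign \<sigma> * sign \<tau>) *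
        (\<Prod>i<m. \<integral>y. h i y * \<phi> (\<sigma> i) y * \<phi> (\<tau> i) y \<partial>M))"
proof -
  have psf: "product_sigma_finite (\<lambda>_::nat. M)"
    by (rule product_sigma_finite_prob_space[OF prob_space_M])
  have summand: "integrable PM (\<lambda>x. \<Prod>i<m. h i (x i) * \<phi> (\<sigma> i) (x i) * \<phi> (\<tau> i) (x i))"
    "(\<integral>x. (\<Prod>i<m. h i (x i) * \<phi> (\<sigma> i) (x i) * \<phi> (\<tau> i) (x i)) \<partial>PM)
        = (\<Prod>i<m. \<integral>y. h i y * \<phi> (\<sigma> i) y * \<phi> (\<tau> i) y \<partial>M)"
    if "\<sigma> permutes {..<m}" "\<tau> permutes {..<m}" for \<sigma> \<tau>
  proof -
    have "integrable M (\<lambda>y. h i y * \<phi> (\<sigma> i) y * \<phi> (\<tau> i) y)" if "i \<in> {..<m}" for i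
      using int that \<open>\<sigma> permutes _\<close> \<open>\<tau> permutes _\<close> by (simp add: permutes_lessThan_less)
    then show "integrable PM (\<lambda>x. \<Prod>i<m. h i (x i) * \<phi> (\<sigma> i) (x i) * \<phi> (\<tau> i) (x i))"
      "(\<integral>x. (\<Prod>i<m. h i (x i) * \<phi> (\<sigma> i) (x i) * \<phi> (\<tau> i) (x i)) \<partial>PM)
        = (\<Prod>i<m. \<integral>y. h i y * \<phi> (\<sigma> i) y * \<phi> (\<tau> i) y \<partial>M)"
      using product_sigma_finite.product_integrable_prod[OF psf, of "{..<m}"
          "\<lambda>i y. h i y * \<phi> (\<sigma> i) y * \<phi> (\<tau> i) y"]
        product_sigma_finite.product_integral_prod[OF psf, of "{..<m}"
          "\<lambda>i y. h i y * \<phi> (\<sigma> i) y * \<phi> (\<tau> i) y"]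
      by auto
  qed
  show "integrable PM (\<lambda>x. (\<Prod>i<m. h i (x i)) * (det_phi x)\<^sup>2)"
    unfolding prod_times_det_phi_sq
    by (intro Bochner_Integration.integrable_sum integrable_mult_right summand) auto
  show "(\<integral>x. (\<Prod>i<m. h i (x i)) * (det_phi x)\<^sup>2 \<partial>PM) =
      (\<Sum>\<sigma> | \<sigma> permutes {..<m}. \<Sum>\<tau> | \<tau> permutes {..<m}. real_of_int (sign \<sigma> * sign \<tau>) *
        (\<Prod>i<m. \<integral>y. h i y * \<phi> (\<sigma> i) y * \<phi> (\<tau> i) y \<partial>M))"
    unfolding prod_times_det_phi_sq
    by (subst Bochner_Integration.integral_sum, (intro Bochner_Integration.integrable_sum integrable_mult_right summand; auto))
       (intro sum.cong refl; subst Bochner_Integration.integral_sum;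
        auto intro!: integrable_mult_right summand sum.cong simp: summand)
qed

lemma integral_prod_on_times_det_phi_sq:
  assumes P: "P \<subseteq> {..<m}"
    and int: "\<And>a c. a < m \<Longrightarrow> c < m \<Longrightarrow> integrable M (\<lambda>y. h y * \<phi> a y * \<phi> c y)"
  shows "integrable PM (\<lambda>x. (\<Prod>i\<in>P. h (x i)) * (det_phi x)\<^sup>2)"
    and "(\<integral>x. (\<Prod>i\<in>P. h (x i)) * (det_phi x)\<^sup>2 \<partial>PM) =
      (\<Sum>\<sigma> | \<sigma> permutes {..<m}. \<Sum>\<tau> | \<tau> permutes {..<m}.
        if \<forall>i \<in> {..<m} - P. \<sigma> i = \<tau> i
        then real_of_int (sign \<sigma> * sign \<tau>) * (\<Prod>i\<in>P. \<integral>y. h y * \<phi> (\<sigma> i) y * \<phi> (\<tau> i) y \<partial>M)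
        else 0)"
proof -
  define hh where "hh i = (if i \<in> P then h else (\<lambda>_. 1))" for i
  have hh_int: "integrable M (\<lambda>y. hh i y * \<phi> a y * \<phi> c y)" if "a < m" "c < m" for i a c
    using int[OF that] integrable_\<phi>_mult[OF that] by (simp add: hh_def)
  have fin: "finite P" using P finite_subset by blast
  have split: "(\<Prod>i<m. F i) = (\<Prod>i\<in>P. F i) * (\<Prod>i\<in>{..<m} - P. F i)" for F :: "nat \<Rightarrow> real"
    using prod.subset_diff[OF P] by (simp add: mult.commute)
  have "(\<Prod>i<m. hh i (x i)) = (\<Prod>i\<in>P. h (x i))" for x
    unfolding split by (simp add: hh_def)
  moreover have "(\<Prod>i<m. \<integral>y. hh i y * \<phi> (\<sigma> i) y * \<phi> (\<tau> i) y \<partial>M) =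
      (if \<forall>i \<in> {..<m} - P. \<sigma> i = \<tau> i then \<Prod>i\<in>P. \<integral>y. h y * \<phi> (\<sigma> i) y * \<phi> (\<tau> i) y \<partial>M else 0)"
    if "\<sigma> permutes {..<m}" "\<tau> permutes {..<m}" for \<sigma> \<tau>
  proof -
    have "(\<Prod>i\<in>{..<m} - P. \<integral>y. hh i y * \<phi> (\<sigma> i) y * \<phi> (\<tau> i) y \<partial>M)
        = (\<Prod>i\<in>{..<m} - P. if \<sigma> i = \<tau> i then 1 else 0)"
      using that by (intro prod.cong refl) (auto simp: hh_def permutes_lessThan_less \<phi>_orthonormal)
    then show ?thesis
      unfolding split by (simp add: hh_def prod_if_one_zero)
  qed
  ultimately show "integrable PM (\<lambda>x. (\<Prod>i\<in>P. h (x i)) * (det_phi x)\<^sup>2)"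
    and "(\<integral>x. (\<Prod>i\<in>P. h (x i)) * (det_phi x)\<^sup>2 \<partial>PM) =
      (\<Sum>\<sigma> | \<sigma> permutes {..<m}. \<Sum>\<tau> | \<tau> permutes {..<m}.
        if \<forall>i \<in> {..<m} - P. \<sigma> i = \<tau> i
        then real_of_int (sign \<sigma> * sign \<tau>) * (\<Prod>i\<in>P. \<integral>y. h y * \<phi> (\<sigma> i) y * \<phi> (\<tau> i) y \<partial>M)
        else 0)"
    using integral_prod_times_det_phi_sq[of hh, OF hh_int] by (auto intro!: sum.cong)
qed

lemma finite_permutations_lessThan: "finite {\<sigma>. \<sigma> permutes {..<m}}"
  by (rule finite_permutations) simp

lemma card_permutations_lessThan: "card {\<sigma>. \<sigma> permutes {..<m}} = fact m"
  by (rule card_permutations) auto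

lemma sum_permutations_delta:
  "\<sigma> permutes {..<m} \<Longrightarrow> (\<Sum>\<tau> | \<tau> permutes {..<m}. if \<tau> = \<sigma> then F \<tau> else 0) = (F \<sigma> :: real)"
  by (simp add: sum.delta[OF finite_permutations_lessThan])

lemma integral_det_phi_sq:
  "integrable PM (\<lambda>x. (det_phi x)\<^sup>2)" "(\<integral>x. (det_phi x)\<^sup>2 \<partial>PM) = fact m"
proof -
  note empty = integral_prod_on_times_det_phi_sq[of "{}" "\<lambda>_. 1"]
  show "integrable PM (\<lambda>x. (det_phi x)\<^sup>2)"
    using empty(1) integrable_\<phi>_mult by simp
  have "(\<integral>x. (det_phi x)\<^sup>2 \<partial>PM) = (\<Sum>\<sigma> | \<sigma> permutes {..<m}. \<Sum>\<tau> | \<tau> permutes {..<m}.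
      if \<tau> = \<sigma> then 1 else 0)"
    using empty(2) integrable_\<phi>_mult
    by (auto simp: permutes_eq_iff_agree sign_mult_self intro!: sum.cong)
  also have "\<dots> = fact m"
    by (simp add: sum_permutations_delta card_permutations_lessThan)
  finally show "(\<integral>x. (det_phi x)\<^sup>2 \<partial>PM) = fact m" .
qed

lemma integral_component_times_det_phi_sq:
  assumes p: "p < m" and int: "\<And>a c. a < m \<Longrightarrow> c < m \<Longrightarrow> integrable M (\<lambda>y. h y * \<phi> a y * \<phi> c y)"
  shows "integrable PM (\<lambda>x. h (x p) * (det_phi x)\<^sup>2)"
    and "(\<integral>x. h (x p) * (det_phi x)\<^sup>2 \<partial>PM) =
      (\<Sum>\<sigma> | \<sigma> permutes {..<m}. \<integral>y. h y * \<phi> (\<sigma> p) y * \<phi> (\<sigma> p) y \<partial>M)"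
proof -
  note single = integral_prod_on_times_det_phi_sq[of "{p}", OF _ int]
  show "integrable PM (\<lambda>x. h (x p) * (det_phi x)\<^sup>2)"
    using single(1) p by simp
  have agree: "(\<forall>i\<in>{..<m} - {p}. \<sigma> i = \<tau> i) \<longleftrightarrow> \<tau> = \<sigma>"
    if "\<sigma> permutes {..<m}" "\<tau> permutes {..<m}" for \<sigma> \<tau>
    using permutes_eq_if_agree_off_point[OF that, of p] p by auto
  show "(\<integral>x. h (x p) * (det_phi x)\<^sup>2 \<partial>PM) =
      (\<Sum>\<sigma> | \<sigma> permutes {..<m}. \<integral>y. h y * \<phi> (\<sigma> p) y * \<phi> (\<sigma> p) y \<partial>M)"
  proof -
    have "(\<integral>x. h (x p) * (det_phi x)\<^sup>2 \<partial>PM) = (\<Sum>\<sigma> | \<sigma> permutes {..<m}. \<Sum>\<tau> | \<tau> permutes {..<m}.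
        if \<tau> = \<sigma> then \<integral>y. h y * \<phi> (\<sigma> p) y * \<phi> (\<sigma> p) y \<partial>M else 0)"
      using single(2) p by (auto simp: agree sign_mult_self intro!: sum.cong)
    then show ?thesis by (simp add: sum_permutations_delta)
  qed
qed

lemma sum_permutes_agree_off_pair:
  fixes U :: "nat \<Rightarrow> nat \<Rightarrow> real"
  assumes s: "\<sigma> permutes {..<m}" and p: "p < m" and q: "q < m" and pq: "p \<noteq> q"
  shows "(\<Sum>\<tau> | \<tau> permutes {..<m}.
        if \<forall>i\<in>{..<m} - {p, q}. \<sigma> i = \<tau> i
        then real_of_int (sign \<sigma> * sign \<tau>) * (\<Prod>i\<in>{p, q}. U (\<sigma> i) (\<tau> i)) else 0)
      = U (\<sigma> p) (\<sigma> p) * U (\<sigma> q) (\<sigma> q) - U (\<sigma> p) (\<sigma> q) * U (\<sigma> q) (\<sigma> p)"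
proof -
  let ?t = "Transposition.transpose p q"
  have st: "\<sigma> \<circ> ?t permutes {..<m}"
    using permutes_compose[OF permutes_swap_id s] p q by auto
  have "\<sigma> \<circ> ?t \<noteq> \<sigma>"
    using pq permutes_inj[OF s] by (metis comp_apply transpose_apply_first injD)
  moreover have "sign (\<sigma> \<circ> ?t) = - sign \<sigma>"
    using sign_compose[OF permutes_imp_permutation[OF _ s] permutation_swap_id] pq
    by (simp add: sign_swap_id)
  moreover have "(\<forall>i\<in>{..<m} - {p, q}. \<sigma> i = \<tau> i) \<longleftrightarrow> \<tau> = \<sigma> \<or> \<tau> = \<sigma> \<circ> ?t"
    if "\<tau> permutes {..<m}" for \<tau>
    using permutes_agree_off_pair[OF s that, of p q] p q pq
    by (auto simp: Transposition.transpose_def split: if_splits)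
  ultimately have "(\<Sum>\<tau> | \<tau> permutes {..<m}.
      if \<forall>i\<in>{..<m} - {p, q}. \<sigma> i = \<tau> i
      then real_of_int (sign \<sigma> * sign \<tau>) * (\<Prod>i\<in>{p, q}. U (\<sigma> i) (\<tau> i)) else 0)
    = (\<Sum>\<tau> | \<tau> permutes {..<m}.
        (if \<tau> = \<sigma> then U (\<sigma> p) (\<sigma> p) * U (\<sigma> q) (\<sigma> q) else 0)
        + (if \<tau> = \<sigma> \<circ> ?t then - (U (\<sigma> p) (\<sigma> q) * U (\<sigma> q) (\<sigma> p)) else 0))"
    using pq by (intro sum.cong refl) (auto simp: sign_mult_self mult_ac)
  also have "\<dots> = U (\<sigma> p) (\<sigma> p) * U (\<sigma> q) (\<sigma> q) - U (\<sigma> p) (\<sigma> q) * U (\<sigma> q) (\<sigma> p)"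
    using s st by (simp add: sum.distrib sum.delta[OF finite_permutations_lessThan])
  finally show ?thesis .
qed

lemma integral_two_components_times_det_phi_sq:
  assumes p: "p < m" and q: "q < m" and pq: "p \<noteq> q"
    and int: "\<And>a c. a < m \<Longrightarrow> c < m \<Longrightarrow> integrable M (\<lambda>y. u y * \<phi> a y * \<phi> c y)"
  defines "U \<equiv> \<lambda>a c. \<integral>y. u y * \<phi> a y * \<phi> c y \<partial>M"
  shows "integrable PM (\<lambda>x. u (x p) * u (x q) * (det_phi x)\<^sup>2)"
    and "(\<integral>x. u (x p) * u (x q) * (det_phi x)\<^sup>2 \<partial>PM) =
      (\<Sum>\<sigma> | \<sigma> permutes {..<m}. U (\<sigma> p) (\<sigma> p) * U (\<sigma> q) (\<sigma> q) - U (\<sigma> p) (\<sigma> q) * U (\<sigma> q) (\<sigma> p))"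
proof -
  note pair = integral_prod_on_times_det_phi_sq[of "{p, q}", OF _ int]
  show "integrable PM (\<lambda>x. u (x p) * u (x q) * (det_phi x)\<^sup>2)"
    using pair(1) p q pq by simp
  have "(\<integral>x. u (x p) * u (x q) * (det_phi x)\<^sup>2 \<partial>PM) = (\<Sum>\<sigma> | \<sigma> permutes {..<m}. \<Sum>\<tau> | \<tau> permutes {..<m}.
      if \<forall>i\<in>{..<m} - {p, q}. \<sigma> i = \<tau> i
      then real_of_int (sign \<sigma> * sign \<tau>) * (\<Prod>i\<in>{p, q}. U (\<sigma> i) (\<tau> i)) else 0)"
    using pair(2) p q pq unfolding U_def by (simp add: mult.assoc)
  then show "(\<integral>x. u (x p) * u (x q) * (det_phi x)\<^sup>2 \<partial>PM) =
      (\<Sum>\<sigma> | \<sigma> permutes {..<m}. U (\<sigma> p) (\<sigma> p) * U (\<sigma> q) (\<sigma> q) - U (\<sigma> p) (\<sigma> q) * U (\<sigma> q) (\<sigma> p))"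
    using sum_permutes_agree_off_pair[OF _ p q pq] by simp
qed

definition dpp_density :: "(nat \<Rightarrow> 'a) \<Rightarrow> real" where
  "dpp_density x = (det_phi x)\<^sup>2 / fact m"

lemma measurable_component: "i < m \<Longrightarrow> h \<in> borel_measurable M \<Longrightarrow> (\<lambda>x. h (x i)) \<in> borel_measurable PM"
  by (rule measurable_compose[OF measurable_component_singleton]) auto

lemma dpp_density_measurable: "dpp_density \<in> borel_measurable PM"
proof -
  have "(\<lambda>x. \<phi> (\<sigma> i) (x i)) \<in> borel_measurable PM" if "\<sigma> permutes {..<m}" "i < m" for \<sigma> i
    using measurable_component \<phi>_measurable that permutes_lessThan_less by blast
  then have "det_phi \<in> borel_measurable PM"
    unfolding det_phi_def by measurable
  then show ?thesis unfolding dpp_density_def by measurable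
qed

lemma gammaDPP_eq_density: "gammaDPP M m \<phi> = density PM (\<lambda>x. ennreal (dpp_density x))"
  unfolding gammaDPP_def dpp_density_def det_gram_PhiMat ..

lemma integrable_gammaDPP_iff: "F \<in> borel_measurable PM \<Longrightarrow>
    integrable (gammaDPP M m \<phi>) F \<longleftrightarrow> integrable PM (\<lambda>x. dpp_density x * F x)"
  unfolding gammaDPP_eq_density
  by (subst integrable_density) (auto simp: dpp_density_measurable dpp_density_def)

lemma integral_gammaDPP: "F \<in> borel_measurable PM \<Longrightarrow>
    (\<integral>x. F x \<partial>gammaDPP M m \<phi>) = (\<integral>x. dpp_density x * F x \<partial>PM)"
  unfolding gammaDPP_eq_density
  by (subst integral_density) (auto simp: dpp_density_measurable dpp_density_def)

lemma prob_space_gammaDPP: "prob_space (gammaDPP M m \<phi>)"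
proof
  have "emeasure (gammaDPP M m \<phi>) (space (gammaDPP M m \<phi>)) = (\<integral>\<^sup>+ x. ennreal (dpp_density x) \<partial>PM)"
    unfolding gammaDPP_eq_density using dpp_density_measurable
    by (subst emeasure_density) (auto intro!: nn_integral_cong)
  also have "\<dots> = ennreal (\<integral>x. dpp_density x \<partial>PM)"
    using integral_det_phi_sq unfolding dpp_density_def
    by (intro nn_integral_eq_integral) (auto intro!: integrable_divide)
  also have "(\<integral>x. dpp_density x \<partial>PM) = 1"
    using integral_det_phi_sq unfolding dpp_density_def by simp
  finally show "emeasure (gammaDPP M m \<phi>) (space (gammaDPP M m \<phi>)) = 1" by simp
qed

lemma sum_permutes_reindex: "\<sigma> permutes {..<m} \<Longrightarrow> (\<Sum>p<m. G (\<sigma> p)) = (\<Sum>a<m. G a)"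
  by (rule sum.reindex_bij_betw[OF permutes_imp_bij])

lemma gammaDPP_integral_sum:
  assumes meas: "h \<in> borel_measurable M"
    and int: "\<And>a c. a < m \<Longrightarrow> c < m \<Longrightarrow> integrable M (\<lambda>y. h y * \<phi> a y * \<phi> c y)"
  shows "integrable (gammaDPP M m \<phi>) (\<lambda>x. \<Sum>i<m. h (x i))"
    and "(\<integral>x. (\<Sum>i<m. h (x i)) \<partial>gammaDPP M m \<phi>) = (\<Sum>a<m. \<integral>y. h y * \<phi> a y * \<phi> a y \<partial>M)"
proof -
  note point = integral_component_times_det_phi_sq[OF _ int]
  have sum_meas: "(\<lambda>x. \<Sum>i<m. h (x i)) \<in> borel_measurable PM"
    using measurable_component[OF _ meas] by (intro borel_measurable_sum) auto
  have density: "dpp_density x * (\<Sum>i<m. h (x i)) = (\<Sum>i<m. h (x i) * (det_phi x)\<^sup>2 / fact m)" for x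
    unfolding sum_distrib_left by (intro sum.cong) (auto simp: dpp_density_def)
  show "integrable (gammaDPP M m \<phi>) (\<lambda>x. \<Sum>i<m. h (x i))"
    unfolding integrable_gammaDPP_iff[OF sum_meas] density
    using point(1) by (intro Bochner_Integration.integrable_sum integrable_divide) auto
  have "(\<integral>x. (\<Sum>i<m. h (x i)) \<partial>gammaDPP M m \<phi>) = (\<Sum>i<m. \<integral>x. h (x i) * (det_phi x)\<^sup>2 \<partial>PM) / fact m"
    unfolding integral_gammaDPP[OF sum_meas] density using point(1)
    by (subst Bochner_Integration.integral_sum) (auto simp: sum_divide_distrib intro!: integrable_divide)
  also have "\<dots> = (\<Sum>\<sigma> | \<sigma> permutes {..<m}. \<Sum>i<m. \<integral>y. h y * \<phi> (\<sigma> i) y * \<phi> (\<sigma> i) y \<partial>M) / fact m"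
    using point(2) by (simp add: sum.swap[of _ "{..<m}"])
  also have "\<dots> = (\<Sum>\<sigma> | \<sigma> permutes {..<m}. \<Sum>a<m. \<integral>y. h y * \<phi> a y * \<phi> a y \<partial>M) / fact m"
    using sum_permutes_reindex[where G="\<lambda>a. \<integral>y. h y * \<phi> a y * \<phi> a y \<partial>M"] by simp
  also have "\<dots> = (\<Sum>a<m. \<integral>y. h y * \<phi> a y * \<phi> a y \<partial>M)"
    using card_permutations_lessThan by simp
  finally show "(\<integral>x. (\<Sum>i<m. h (x i)) \<partial>gammaDPP M m \<phi>) = (\<Sum>a<m. \<integral>y. h y * \<phi> a y * \<phi> a y \<partial>M)" .
qed

lemma gammaDPP_integral_sum_distinct_pairs:
  assumes meas: "u \<in> borel_measurable M"
    and int: "\<And>a c. a < m \<Longrightarrow> c < m \<Longrightarrow> integrable M (\<lambda>y. u y * \<phi> a y * \<phi> c y)"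
  defines "U \<equiv> \<lambda>a c. \<integral>y. u y * \<phi> a y * \<phi> c y \<partial>M"
  shows "integrable (gammaDPP M m \<phi>) (\<lambda>x. \<Sum>p<m. \<Sum>q\<in>{..<m} - {p}. u (x p) * u (x q))"
    and "(\<integral>x. (\<Sum>p<m. \<Sum>q\<in>{..<m} - {p}. u (x p) * u (x q)) \<partial>gammaDPP M m \<phi>) =
       (\<Sum>a<m. U a a)\<^sup>2 - (\<Sum>a<m. \<Sum>c<m. U a c * U c a)"
proof -
  define F where "F a c = U a a * U c c - U a c * U c a" for a c
  note pair = integral_two_components_times_det_phi_sq[OF _ _ _ int]
  let ?B = "\<lambda>x. \<Sum>p<m. \<Sum>q\<in>{..<m} - {p}. u (x p) * u (x q)"
  have B_meas: "?B \<in> borel_measurable PM"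
    using measurable_component[OF _ meas] by (intro borel_measurable_sum borel_measurable_times) auto
  have density: "dpp_density x * ?B x = (\<Sum>p<m. \<Sum>q\<in>{..<m} - {p}. u (x p) * u (x q) * (det_phi x)\<^sup>2 / fact m)" for x
    unfolding sum_distrib_left by (intro sum.cong refl) (auto simp: dpp_density_def)
  have pair_int: "integrable PM (\<lambda>x. \<Sum>q\<in>{..<m} - {p}. u (x p) * u (x q) * (det_phi x)\<^sup>2 / fact m)"
    if "p < m" for p
    using pair(1) that by (intro Bochner_Integration.integrable_sum integrable_divide) auto
  show "integrable (gammaDPP M m \<phi>) ?B"
    unfolding integrable_gammaDPP_iff[OF B_meas] density
    by (intro Bochner_Integration.integrable_sum pair_int) auto
  have "(\<integral>x. ?B x \<partial>gammaDPP M m \<phi>) = (\<Sum>p<m. \<Sum>q\<in>{..<m} - {p}. \<integral>x. u (x p) * u (x q) * (det_phi x)\<^sup>2 \<partial>PM) / fact m"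
    unfolding integral_gammaDPP[OF B_meas] density using pair(1) pair_int
    by (simp add: Bochner_Integration.integral_sum sum_divide_distrib)
  also have "\<dots> = (\<Sum>p<m. \<Sum>q\<in>{..<m} - {p}. \<Sum>\<sigma> | \<sigma> permutes {..<m}. F (\<sigma> p) (\<sigma> q)) / fact m"
    using pair(2) unfolding F_def U_def by simp
  also have "\<dots> = (\<Sum>\<sigma> | \<sigma> permutes {..<m}. \<Sum>p<m. \<Sum>q<m. F (\<sigma> p) (\<sigma> q)) / fact m"
    by (simp add: sum.swap[of _ "{\<sigma>. \<sigma> permutes {..<m}}"] sum_diff1 F_def)
  also have "\<dots> = (\<Sum>a<m. \<Sum>c<m. F a c)"
    using sum_permutes_reindex[where G="\<lambda>a. \<Sum>c<m. F a c"] sum_permutes_reindex[where G="F _"]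
      card_permutations_lessThan by simp
  also have "\<dots> = (\<Sum>a<m. U a a)\<^sup>2 - (\<Sum>a<m. \<Sum>c<m. U a c * U c a)"
    unfolding F_def power2_eq_square sum_product sum_subtractf ..
  finally show "(\<integral>x. ?B x \<partial>gammaDPP M m \<phi>) = (\<Sum>a<m. U a a)\<^sup>2 - (\<Sum>a<m. \<Sum>c<m. U a c * U c a)" .
qed

lemma gammaDPP_integral_sum_sq:
  assumes meas: "u \<in> borel_measurable M"
    and int: "\<And>a c. a < m \<Longrightarrow> c < m \<Longrightarrow> integrable M (\<lambda>y. u y * \<phi> a y * \<phi> c y)"
    and int_sq: "\<And>a c. a < m \<Longrightarrow> c < m \<Longrightarrow> integrable M (\<lambda>y. u y * u y * \<phi> a y * \<phi> c y)"
  defines "U \<equiv> \<lambda>a c. \<integral>y. u y * \<phi> a y * \<phi> c y \<partial>M"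
  shows "integrable (gammaDPP M m \<phi>) (\<lambda>x. (\<Sum>i<m. u (x i))\<^sup>2)"
    and "(\<integral>x. (\<Sum>i<m. u (x i))\<^sup>2 \<partial>gammaDPP M m \<phi>) =
       (\<Sum>a<m. \<integral>y. u y * u y * \<phi> a y * \<phi> a y \<partial>M) + ((\<Sum>a<m. U a a)\<^sup>2 - (\<Sum>a<m. \<Sum>c<m. U a c * U c a))"
proof -
  have split: "(\<Sum>i<m. u (x i))\<^sup>2 = (\<Sum>i<m. u (x i) * u (x i)) + (\<Sum>p<m. \<Sum>q\<in>{..<m} - {p}. u (x p) * u (x q))" for x
    by (simp add: power2_eq_square sum_product sum.remove[of "{..<m}"] sum.distrib)
  note diag = gammaDPP_integral_sum[of "\<lambda>y. u y * u y", OF _ int_sq]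
  note off_diag = gammaDPP_integral_sum_distinct_pairs[OF meas int]
  show "integrable (gammaDPP M m \<phi>) (\<lambda>x. (\<Sum>i<m. u (x i))\<^sup>2)"
    unfolding split using diag(1) off_diag(1) meas by simp
  show "(\<integral>x. (\<Sum>i<m. u (x i))\<^sup>2 \<partial>gammaDPP M m \<phi>) =
       (\<Sum>a<m. \<integral>y. u y * u y * \<phi> a y * \<phi> a y \<partial>M) + ((\<Sum>a<m. U a a)\<^sup>2 - (\<Sum>a<m. \<Sum>c<m. U a c * U c a))"
    unfolding split U_def using diag off_diag meas by simp
qed

end

section \<open>The weighted empirical inner product and its Gram matrix\<close>

locale wls_problem = orthonormal_system M \<phi> m for M :: "'a measure" and \<phi> m +
  fixes r :: nat and f :: "'a \<Rightarrow> real"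
  assumes m_pos: "m \<ge> 1" and r_pos: "r \<ge> 1"
    and f_measurable: "f \<in> borel_measurable M"
    and f_square_integrable: "integrable M (\<lambda>y. (f y)\<^sup>2)"
begin

text \<open>Where w_m vanishes, inverse gives the junk value 0; this is harmless since all phi_k vanish there too.\<close>

definition inv_wm :: "'a \<Rightarrow> real" where "inv_wm y = inverse (wm m \<phi> y)"

definition emp_inner :: "(nat \<Rightarrow> nat \<Rightarrow> 'a) \<Rightarrow> ('a \<Rightarrow> real) \<Rightarrow> ('a \<Rightarrow> real) \<Rightarrow> real" where
  "emp_inner x u v = (1 / real (m * r)) * (\<Sum>j<r. \<Sum>i<m. inv_wm (x j i) * u (x j i) * v (x j i))"

abbreviation G :: "(nat \<Rightarrow> nat \<Rightarrow> 'a) \<Rightarrow> real mat" where "G x \<equiv> gram m r \<phi> (wm m \<phi>) x"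

lemma wm_nonneg: "wm m \<phi> y \<ge> 0"
  by (simp add: wm_def sum_nonneg)

lemma inv_wm_nonneg: "inv_wm y \<ge> 0"
  using wm_nonneg by (simp add: inv_wm_def)

lemma inv_wm_measurable: "inv_wm \<in> borel_measurable M"
  unfolding inv_wm_def wm_def using \<phi>_measurable by measurable

lemma sum_phi_sq: "(\<Sum>k<m. \<phi> k y * \<phi> k y) = real m * wm m \<phi> y"
  using m_pos by (simp add: wm_def power2_eq_square)

lemma phi_sq_le: "k < m \<Longrightarrow> (\<phi> k y)\<^sup>2 \<le> real m * wm m \<phi> y"
  unfolding sum_phi_sq[symmetric] power2_eq_square by (intro member_le_sum) auto

lemma inv_wm_mult_wm_le_1: "inv_wm y * wm m \<phi> y \<le> 1"
  by (cases "wm m \<phi> y = 0") (auto simp: inv_wm_def)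

lemma inv_wm_mult_wm_nonneg: "inv_wm y * wm m \<phi> y \<ge> 0"
  using inv_wm_nonneg wm_nonneg by simp

lemma inv_wm_mult_wm_phi: "k < m \<Longrightarrow> inv_wm y * wm m \<phi> y * \<phi> k y = \<phi> k y"
  using phi_sq_le[of k y] by (cases "wm m \<phi> y = 0") (auto simp: inv_wm_def)

lemma abs_phi_mult_le: "a < m \<Longrightarrow> c < m \<Longrightarrow> \<bar>\<phi> a y * \<phi> c y\<bar> \<le> 2 * real m * wm m \<phi> y"
  using abs_mult_le_sum_squares[of "\<phi> a y" "\<phi> c y"] phi_sq_le[of a y] phi_sq_le[of c y] by linarith

lemma emp_inner_sym: "emp_inner x u v = emp_inner x v u"
  unfolding emp_inner_def by (simp add: mult_ac)

lemma emp_inner_nonneg: "emp_inner x u u \<ge> 0"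
  unfolding emp_inner_def using inv_wm_nonneg by (simp add: sum_nonneg mult.assoc)

lemma emp_inner_diff: "emp_inner x (\<lambda>y. u y - v y) w = emp_inner x u w - emp_inner x v w"
  unfolding emp_inner_def by (simp add: algebra_simps sum_subtractf)

lemma emp_inner_lin_comb: "emp_inner x (\<lambda>y. \<Sum>k<n. c k * F k y) w = (\<Sum>k<n. c k * emp_inner x (F k) w)"
  unfolding emp_inner_def
  by (simp add: sum_distrib_left sum_distrib_right sum.swap[of _ "{..<n}"] mult_ac)

lemma emp_inner_add_scaled:
  "emp_inner x (\<lambda>y. u y + t * v y) (\<lambda>y. u y + t * v y) =
   emp_inner x u u + 2 * t * emp_inner x u v + t\<^sup>2 * emp_inner x v v"
  unfolding emp_inner_def
  by (simp add: algebra_simps power2_eq_square sum.distrib sum_distrib_left)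

lemma emp_inner_Cauchy_Schwarz: "(emp_inner x u v)\<^sup>2 \<le> emp_inner x u u * emp_inner x v v"
  using emp_inner_nonneg[of x "\<lambda>y. u y + _ * v y"] emp_inner_nonneg[of x v]
  by (intro quadratic_nonneg_imp_discriminant_le) (auto simp: emp_inner_add_scaled)

lemma emp_norm_eq: "emp_norm m r (wm m \<phi>) x u = sqrt (emp_inner x u u)"
  unfolding emp_norm_def emp_inner_def inv_wm_def by (simp add: power2_eq_square mult.assoc)

lemma G_carrier: "G x \<in> carrier_mat m m"
  by (simp add: gram_def)

lemma G_entry: "k < m \<Longrightarrow> l < m \<Longrightarrow> G x $$ (k, l) = emp_inner x (\<phi> k) (\<phi> l)"
  by (simp add: gram_def emp_inner_def inv_wm_def)

lemma G_sym: "k < m \<Longrightarrow> l < m \<Longrightarrow> G x $$ (k, l) = G x $$ (l, k)"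
  by (simp add: G_entry emp_inner_sym)

lemma emp_inner_phi_lin_comb: "emp_inner x (\<phi> l) (\<lambda>y. \<Sum>k<m. c k * \<phi> k y) = (\<Sum>k<m. G x $$ (l, k) * c k)"
  if "l < m"
  using that by (simp add: emp_inner_sym[of x "\<phi> l"] emp_inner_lin_comb G_entry mult.commute)

lemma qform_G: "qform (G x) m c = emp_inner x (\<lambda>y. \<Sum>k<m. c k * \<phi> k y) (\<lambda>y. \<Sum>k<m. c k * \<phi> k y)"
  unfolding qform_def emp_inner_lin_comb
  by (simp add: emp_inner_phi_lin_comb sum_distrib_left mult.assoc)

lemma qform_G_ge:
  assumes "lambda_min (G x) \<ge> c"
  shows "qform (G x) m v \<ge> c * sqnorm m v"
proof (rule qform_ge_if_eigenvalues_ge[OF G_carrier G_sym])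
  show "c \<le> \<mu>" if "eigenvalue (G x) \<mu>" for \<mu>
    using assms lambda_min_le_eigenvalue[OF G_carrier that] by linarith
qed

definition coef :: "nat \<Rightarrow> real" where "coef k = (\<integral>y. f y * \<phi> k y \<partial>M)"

definition resid :: "'a \<Rightarrow> real" where "resid y = f y - (\<Sum>k<m. coef k * \<phi> k y)"

lemma integrable_f_mult_phi: "k < m \<Longrightarrow> integrable M (\<lambda>y. f y * \<phi> k y)"
proof -
  assume k: "k < m"
  have "integrable M (\<lambda>y. (f y)\<^sup>2 + (\<phi> k y)\<^sup>2)"
    using f_square_integrable \<phi>_square_integrable[OF k] by simp
  then show ?thesis
  proof (rule Bochner_Integration.integrable_bound)
    show "(\<lambda>y. f y * \<phi> k y) \<in> borel_measurable M" using f_measurable \<phi>_measurable[OF k] by simp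
    show "AE y in M. norm (f y * \<phi> k y) \<le> norm ((f y)\<^sup>2 + (\<phi> k y)\<^sup>2)"
      using abs_mult_le_sum_squares by (auto intro!: AE_I2)
  qed
qed

lemma lin_comb_measurable: "(\<lambda>y. \<Sum>k<m. c k * \<phi> k y) \<in> borel_measurable M"
  using \<phi>_measurable by (intro borel_measurable_sum borel_measurable_times borel_measurable_const) auto

lemma resid_measurable: "resid \<in> borel_measurable M"
  unfolding resid_def using f_measurable lin_comb_measurable by simp

lemma integrable_lin_comb_mult_phi: "l < m \<Longrightarrow> integrable M (\<lambda>y. (\<Sum>k<m. c k * \<phi> k y) * \<phi> l y)"
  unfolding sum_distrib_right using integrable_\<phi>_mult
  by (intro Bochner_Integration.integrable_sum) (auto simp: mult.assoc)

lemma integral_lin_comb_mult_phi: "l < m \<Longrightarrow> (\<integral>y. (\<Sum>k<m. c k * \<phi> k y) * \<phi> l y \<partial>M) = c l"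
proof -
  assume l: "l < m"
  have "(\<integral>y. (\<Sum>k<m. c k * \<phi> k y) * \<phi> l y \<partial>M) = (\<Sum>k<m. c k * (\<integral>y. \<phi> k y * \<phi> l y \<partial>M))"
    unfolding sum_distrib_right mult.assoc
    using integrable_\<phi>_mult l by (subst Bochner_Integration.integral_sum) auto
  also have "\<dots> = (\<Sum>k<m. if k = l then c l else 0)"
    using l \<phi>_orthonormal by (intro sum.cong refl) auto
  also have "\<dots> = c l" using l by simp
  finally show ?thesis .
qed

lemma integrable_resid_mult_phi: "l < m \<Longrightarrow> integrable M (\<lambda>y. resid y * \<phi> l y)"
  unfolding resid_def left_diff_distrib
  using integrable_f_mult_phi integrable_lin_comb_mult_phi by simp

lemma integral_resid_mult_phi: "l < m \<Longrightarrow> (\<integral>y. resid y * \<phi> l y \<partial>M) = 0"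
  unfolding resid_def left_diff_distrib
  using integrable_f_mult_phi integrable_lin_comb_mult_phi integral_lin_comb_mult_phi
  by (simp add: coef_def)

lemma lin_comb_sq_eq: "(\<Sum>k<m. c k * \<phi> k y)\<^sup>2 = (\<Sum>l<m. c l * ((\<Sum>k<m. c k * \<phi> k y) * \<phi> l y))"
  by (simp add: power2_eq_square sum_distrib_left sum_distrib_right mult_ac)

lemma integrable_lin_comb_sq: "integrable M (\<lambda>y. (\<Sum>k<m. c k * \<phi> k y)\<^sup>2)"
  unfolding lin_comb_sq_eq using integrable_lin_comb_mult_phi
  by (intro Bochner_Integration.integrable_sum integrable_mult_right) auto

lemma integral_lin_comb_sq: "(\<integral>y. (\<Sum>k<m. c k * \<phi> k y)\<^sup>2 \<partial>M) = sqnorm m c"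
  unfolding lin_comb_sq_eq sqnorm_def using integrable_lin_comb_mult_phi integral_lin_comb_mult_phi
  by (simp add: Bochner_Integration.integral_sum power2_eq_square)

lemma integrable_resid_sq: "integrable M (\<lambda>y. (resid y)\<^sup>2)"
proof -
  have "(resid y)\<^sup>2 = (f y)\<^sup>2 - 2 * (\<Sum>k<m. coef k * (f y * \<phi> k y)) + (\<Sum>k<m. coef k * \<phi> k y)\<^sup>2" for y
    unfolding resid_def by (simp add: power2_eq_square algebra_simps sum_distrib_left)
  then show ?thesis
    using f_square_integrable integrable_lin_comb_sq integrable_f_mult_phi
    by (simp del: power2_eq_square)
      (intro Bochner_Integration.integrable_add Bochner_Integration.integrable_diff integrable_mult_right
        Bochner_Integration.integrable_sum; simp)
qed

lemma integral_resid_plus_lin_comb_sq: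
  "integrable M (\<lambda>y. (resid y + (\<Sum>k<m. c k * \<phi> k y))\<^sup>2)"
  "(\<integral>y. (resid y + (\<Sum>k<m. c k * \<phi> k y))\<^sup>2 \<partial>M) = (\<integral>y. (resid y)\<^sup>2 \<partial>M) + sqnorm m c"
proof -
  have cross: "integrable M (\<lambda>y. resid y * (\<Sum>k<m. c k * \<phi> k y))"
    "(\<integral>y. resid y * (\<Sum>k<m. c k * \<phi> k y) \<partial>M) = 0"
    unfolding sum_distrib_left using integrable_resid_mult_phi integral_resid_mult_phi
    by (auto simp: mult.left_commute Bochner_Integration.integral_sum intro!: Bochner_Integration.integrable_sum)
  have "(resid y + (\<Sum>k<m. c k * \<phi> k y))\<^sup>2 =
      (resid y)\<^sup>2 + 2 * (resid y * (\<Sum>k<m. c k * \<phi> k y)) + (\<Sum>k<m. c k * \<phi> k y)\<^sup>2" for y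
    by (simp add: power2_eq_square algebra_simps)
  then show "integrable M (\<lambda>y. (resid y + (\<Sum>k<m. c k * \<phi> k y))\<^sup>2)"
    and "(\<integral>y. (resid y + (\<Sum>k<m. c k * \<phi> k y))\<^sup>2 \<partial>M) = (\<integral>y. (resid y)\<^sup>2 \<partial>M) + sqnorm m c"
    using integrable_resid_sq cross integrable_lin_comb_sq integral_lin_comb_sq by simp_all
qed

lemma f_minus_lin_comb: "f y - (\<Sum>k<m. e k * \<phi> k y) = resid y + (\<Sum>k<m. (coef k - e k) * \<phi> k y)"
  unfolding resid_def by (simp add: left_diff_distrib sum_subtractf)

lemma best_approx_eq: "(INF h \<in> Vspace m \<phi>. \<integral>y. (f y - h y)\<^sup>2 \<partial>M) = (\<integral>y. (resid y)\<^sup>2 \<partial>M)"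
proof -
  have dist: "(\<integral>y. (f y - (\<Sum>k<m. e k * \<phi> k y))\<^sup>2 \<partial>M) = (\<integral>y. (resid y)\<^sup>2 \<partial>M) + sqnorm m (\<lambda>k. coef k - e k)"
    for e unfolding f_minus_lin_comb integral_resid_plus_lin_comb_sq(2) ..
  have lower: "(\<integral>y. (resid y)\<^sup>2 \<partial>M) \<le> (\<integral>y. (f y - h y)\<^sup>2 \<partial>M)" if "h \<in> Vspace m \<phi>" for h
    using that dist sqnorm_nonneg unfolding Vspace_def by force
  have attained: "(\<integral>y. (f y - (\<Sum>k<m. coef k * \<phi> k y))\<^sup>2 \<partial>M) = (\<integral>y. (resid y)\<^sup>2 \<partial>M)"
    using dist[of coef] by (simp add: sqnorm_def)
  have mem: "(\<lambda>y. \<Sum>k<m. coef k * \<phi> k y) \<in> Vspace m \<phi>" unfolding Vspace_def by blast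
  show ?thesis
  proof (rule antisym)
    show "(INF h \<in> Vspace m \<phi>. \<integral>y. (f y - h y)\<^sup>2 \<partial>M) \<le> (\<integral>y. (resid y)\<^sup>2 \<partial>M)"
      using mem attained lower by (intro cINF_lower2[OF bdd_belowI2]) auto
    show "(\<integral>y. (resid y)\<^sup>2 \<partial>M) \<le> (INF h \<in> Vspace m \<phi>. \<integral>y. (f y - h y)\<^sup>2 \<partial>M)"
      using mem lower by (intro cINF_greatest) auto
  qed
qed

section \<open>The weighted least-squares projection on a well-conditioned sample\<close>

definition emp_coef :: "(nat \<Rightarrow> nat \<Rightarrow> 'a) \<Rightarrow> nat \<Rightarrow> real" where
  "emp_coef x k = emp_inner x resid (\<phi> k)"

text \<open>When d solves the normal equations, f minus P f + sum_k d_k phi_k is empirically orthogonal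
  to V_m, so Pythagoras holds for the empirical seminorm.\<close>

lemma emp_inner_decomp:
  assumes d: "\<And>k. k < m \<Longrightarrow> (\<Sum>l<m. G x $$ (k, l) * d l) = emp_coef x k"
  defines "h \<equiv> \<lambda>y. \<Sum>k<m. (coef k + d k) * \<phi> k y"
  shows "emp_inner x (\<lambda>y. f y - (\<Sum>k<m. e k * \<phi> k y)) (\<lambda>y. f y - (\<Sum>k<m. e k * \<phi> k y))
      = emp_inner x (\<lambda>y. f y - h y) (\<lambda>y. f y - h y) + qform (G x) m (\<lambda>k. coef k + d k - e k)"
proof -
  have "f y - h y = resid y - (\<Sum>k<m. d k * \<phi> k y)" for y
    unfolding h_def resid_def by (simp add: distrib_right sum.distrib)
  then have normal: "emp_inner x (\<phi> l) (\<lambda>y. f y - h y) = 0" if "l < m" for l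
  proof -
    have "emp_inner x (\<lambda>y. \<Sum>k<m. d k * \<phi> k y) (\<phi> l) = (\<Sum>k<m. G x $$ (l, k) * d k)"
      by (subst emp_inner_sym) (rule emp_inner_phi_lin_comb[OF that])
    then show ?thesis
      using d[OF that] \<open>\<And>y. f y - h y = _\<close>
      by (simp add: emp_inner_sym[of x "\<phi> l"] emp_inner_diff emp_coef_def)
  qed
  have orth: "emp_inner x (\<lambda>y. f y - h y) (\<lambda>y. \<Sum>k<m. c k * \<phi> k y) = 0" for c
    using normal by (simp add: emp_inner_sym[of x "\<lambda>y. f y - h y"] emp_inner_lin_comb)
  have "(\<lambda>y. f y - (\<Sum>k<m. e k * \<phi> k y)) =
      (\<lambda>y. (f y - h y) + 1 * (\<Sum>k<m. (coef k + d k - e k) * \<phi> k y))"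
    unfolding h_def by (auto simp: left_diff_distrib sum_subtractf)
  then show ?thesis
    by (simp only: emp_inner_add_scaled orth qform_G) simp
qed

lemma wls_proj_eq:
  assumes lm: "lambda_min (G x) \<ge> c" and c: "c > 0"
    and d: "\<And>k. k < m \<Longrightarrow> (\<Sum>l<m. G x $$ (k, l) * d l) = emp_coef x k"
  shows "wls_proj m r \<phi> (wm m \<phi>) x f = (\<lambda>y. \<Sum>k<m. (coef k + d k) * \<phi> k y)"
    (is "_ = ?h")
proof -
  let ?E = "\<lambda>h. emp_inner x (\<lambda>y. f y - h y) (\<lambda>y. f y - h y)"
  let ?err = "\<lambda>h. emp_norm m r (wm m \<phi>) x (\<lambda>y. f y - h y)"
  have err_le_iff: "?err h1 \<le> ?err h2 \<longleftrightarrow> ?E h1 \<le> ?E h2" for h1 h2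
    by (simp add: emp_norm_eq)
  have decomp: "?E (\<lambda>y. \<Sum>k<m. e k * \<phi> k y) = ?E ?h + qform (G x) m (\<lambda>k. coef k + d k - e k)" for e
    using emp_inner_decomp[OF d, of e] by simp
  have pos: "qform (G x) m v \<ge> c * sqnorm m v" for v
    by (rule qform_G_ge[OF lm])
  have h_in: "?h \<in> Vspace m \<phi>" unfolding Vspace_def by (intro CollectI exI[of _ "\<lambda>k. coef k + d k"]) simp
  show ?thesis
    unfolding wls_proj_def
  proof (rule the_equality)
    show "?h \<in> Vspace m \<phi> \<and> (\<forall>h' \<in> Vspace m \<phi>. ?err ?h \<le> ?err h')"
    proof (intro conjI ballI h_in)
      fix h' assume "h' \<in> Vspace m \<phi>"
      then obtain e where h': "h' = (\<lambda>y. \<Sum>k<m. e k * \<phi> k y)" unfolding Vspace_def by blast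
      have "0 \<le> qform (G x) m (\<lambda>k. coef k + d k - e k)"
        using order_trans[OF mult_nonneg_nonneg[OF less_imp_le[OF c] sqnorm_nonneg] pos] .
      then show "?err ?h \<le> ?err h'"
        unfolding h' err_le_iff using decomp[of e] by linarith
    qed
  next
    fix h' assume min: "h' \<in> Vspace m \<phi> \<and> (\<forall>h'' \<in> Vspace m \<phi>. ?err h' \<le> ?err h'')"
    then obtain e where h': "h' = (\<lambda>y. \<Sum>k<m. e k * \<phi> k y)" unfolding Vspace_def by blast
    have "?err h' \<le> ?err ?h" using bspec[OF conjunct2[OF min] h_in] .
    then have "qform (G x) m (\<lambda>k. coef k + d k - e k) \<le> 0"
      unfolding h' err_le_iff using decomp[of e] by linarith
    then have "c * sqnorm m (\<lambda>k. coef k + d k - e k) \<le> 0"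
      using pos order_trans by blast
    then have "sqnorm m (\<lambda>k. coef k + d k - e k) = 0"
      using c sqnorm_nonneg[of m "\<lambda>k. coef k + d k - e k"] by (simp add: mult_le_0_iff)
    then show "h' = ?h"
      unfolding h' sqnorm_eq_0_iff by (auto intro!: sum.cong)
  qed
qed

lemma wls_error_eq:
  assumes lm: "lambda_min (G x) \<ge> c" and c: "c > 0"
    and d: "\<And>k. k < m \<Longrightarrow> (\<Sum>l<m. G x $$ (k, l) * d l) = emp_coef x k"
  shows "(\<integral>y. (f y - wls_proj m r \<phi> (wm m \<phi>) x f y)\<^sup>2 \<partial>M) = (\<integral>y. (resid y)\<^sup>2 \<partial>M) + sqnorm m d"
proof -
  have "f y - wls_proj m r \<phi> (wm m \<phi>) x f y = resid y + (\<Sum>k<m. (- d k) * \<phi> k y)" for y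
    using wls_proj_eq[OF lm c d] by (simp add: resid_def distrib_right sum.distrib sum_negf)
  then show ?thesis
    using integral_resid_plus_lin_comb_sq(2)[of "\<lambda>k. - d k"] by (simp add: sqnorm_def)
qed

lemma normal_solution_sqnorm_le:
  assumes lm: "lambda_min (G x) \<ge> c" and c: "c > 0"
    and d: "\<And>k. k < m \<Longrightarrow> (\<Sum>l<m. G x $$ (k, l) * d l) = emp_coef x k"
  shows "sqnorm m d \<le> emp_inner x resid resid / c"
    and "sqnorm m d \<le> sqnorm m (emp_coef x) / c\<^sup>2"
proof -
  define q where "q = qform (G x) m d"
  have q_coef: "q = (\<Sum>k<m. d k * emp_coef x k)"
    unfolding q_def qform_def using d by (simp add: mult.assoc sum_distrib_left[symmetric])
  have q_inner: "q = emp_inner x (\<lambda>y. \<Sum>k<m. d k * \<phi> k y) resid"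
    unfolding q_coef emp_inner_lin_comb emp_coef_def using emp_inner_sym by simp
  have q_lower: "c * sqnorm m d \<le> q"
    unfolding q_def by (rule qform_G_ge[OF lm])
  then have "q \<ge> 0" using order_trans[OF mult_nonneg_nonneg[OF less_imp_le[OF c] sqnorm_nonneg]] by blast
  have "q\<^sup>2 \<le> q * emp_inner x resid resid"
    using emp_inner_Cauchy_Schwarz[of x "\<lambda>y. \<Sum>k<m. d k * \<phi> k y" resid]
    unfolding q_inner[symmetric] qform_G[symmetric] q_def[symmetric] .
  then have "q \<le> emp_inner x resid resid"
    using \<open>q \<ge> 0\<close> emp_inner_nonneg[of x resid] by (cases "q = 0") (auto simp: power2_eq_square)
  then show "sqnorm m d \<le> emp_inner x resid resid / c"
    using q_lower c by (simp add: le_divide_eq mult.commute)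
  have "(c * sqnorm m d)\<^sup>2 \<le> q\<^sup>2"
    using q_lower c sqnorm_nonneg[of m d] by (intro power_mono) auto
  also have "q\<^sup>2 \<le> sqnorm m d * sqnorm m (emp_coef x)"
    unfolding q_coef sqnorm_def by (rule Cauchy_Schwarz_ineq_sum)
  finally have "c\<^sup>2 * sqnorm m d * sqnorm m d \<le> sqnorm m (emp_coef x) * sqnorm m d"
    by (simp add: power2_eq_square mult_ac)
  then have "c\<^sup>2 * sqnorm m d \<le> sqnorm m (emp_coef x)"
    using sqnorm_nonneg[of m d] sqnorm_nonneg[of m "emp_coef x"]
    by (cases "sqnorm m d = 0") (auto simp: mult_le_cancel_right)
  then show "sqnorm m d \<le> sqnorm m (emp_coef x) / c\<^sup>2"
    using c by (simp add: le_divide_eq mult.commute)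
qed

lemma wls_error_le:
  assumes lm: "lambda_min (G x) \<ge> c" and c: "c > 0"
  shows "(\<integral>y. (f y - wls_proj m r \<phi> (wm m \<phi>) x f y)\<^sup>2 \<partial>M) \<le> (\<integral>y. (resid y)\<^sup>2 \<partial>M) + emp_inner x resid resid / c"
    and "(\<integral>y. (f y - wls_proj m r \<phi> (wm m \<phi>) x f y)\<^sup>2 \<partial>M) \<le> (\<integral>y. (resid y)\<^sup>2 \<partial>M) + sqnorm m (emp_coef x) / c\<^sup>2"
proof -
  obtain d where d: "\<And>k. k < m \<Longrightarrow> (\<Sum>l<m. G x $$ (k, l) * d l) = emp_coef x k"
    using qform_pos_imp_solvable[OF G_carrier c qform_G_ge[OF lm]] by blast
  show "(\<integral>y. (f y - wls_proj m r \<phi> (wm m \<phi>) x f y)\<^sup>2 \<partial>M) \<le> (\<integral>y. (resid y)\<^sup>2 \<partial>M) + emp_inner x resid resid / c"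
    and "(\<integral>y. (f y - wls_proj m r \<phi> (wm m \<phi>) x f y)\<^sup>2 \<partial>M) \<le> (\<integral>y. (resid y)\<^sup>2 \<partial>M) + sqnorm m (emp_coef x) / c\<^sup>2"
    using wls_error_eq[OF lm c d] normal_solution_sqnorm_le[OF lm c d] by simp_all
qed

section \<open>Expected empirical quantities under the projection DPP\<close>

definition wresid_sq :: "'a \<Rightarrow> real" where "wresid_sq y = inv_wm y * resid y * resid y"

definition wresid_phi :: "nat \<Rightarrow> 'a \<Rightarrow> real" where "wresid_phi k y = inv_wm y * resid y * \<phi> k y"

lemma integrable_inv_wm_mult_phi:
  assumes meas: "g \<in> borel_measurable M" and int: "integrable M g" and ac: "a < m" "c < m"
  shows "integrable M (\<lambda>y. inv_wm y * g y * \<phi> a y * \<phi> c y)"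
proof -
  have "integrable M (\<lambda>y. 2 * real m * \<bar>g y\<bar>)" using int by simp
  then show ?thesis
  proof (rule Bochner_Integration.integrable_bound)
    show "(\<lambda>y. inv_wm y * g y * \<phi> a y * \<phi> c y) \<in> borel_measurable M"
      using inv_wm_measurable meas \<phi>_measurable ac by simp
    show "AE y in M. norm (inv_wm y * g y * \<phi> a y * \<phi> c y) \<le> norm (2 * real m * \<bar>g y\<bar>)"
    proof (intro AE_I2)
      fix y
      have "\<bar>inv_wm y * g y * \<phi> a y * \<phi> c y\<bar> = \<bar>g y\<bar> * (inv_wm y * \<bar>\<phi> a y * \<phi> c y\<bar>)"
        using inv_wm_nonneg[of y] by (simp add: abs_mult mult_ac)
      also have "\<dots> \<le> \<bar>g y\<bar> * (inv_wm y * (2 * real m * wm m \<phi> y))"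
        by (rule mult_left_mono[OF mult_left_mono[OF abs_phi_mult_le[OF ac, of y] inv_wm_nonneg[of y]] abs_ge_zero])
      also have "\<dots> = \<bar>g y\<bar> * (2 * real m * (inv_wm y * wm m \<phi> y))"
        by (simp add: mult_ac)
      also have "\<dots> \<le> \<bar>g y\<bar> * (2 * real m)"
        by (rule mult_left_mono[OF mult_left_le[OF inv_wm_mult_wm_le_1]]) auto
      finally show "norm (inv_wm y * g y * \<phi> a y * \<phi> c y) \<le> norm (2 * real m * \<bar>g y\<bar>)"
        by (simp add: mult_ac)
    qed
  qed
qed

lemma wresid_sq_measurable: "wresid_sq \<in> borel_measurable M"
  unfolding wresid_sq_def using inv_wm_measurable resid_measurable by simp

lemma wresid_phi_measurable: "k < m \<Longrightarrow> wresid_phi k \<in> borel_measurable M"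
  unfolding wresid_phi_def using inv_wm_measurable resid_measurable \<phi>_measurable by simp

lemma integrable_wresid_sq_phi:
  "a < m \<Longrightarrow> c < m \<Longrightarrow> integrable M (\<lambda>y. wresid_sq y * \<phi> a y * \<phi> c y)"
  using integrable_inv_wm_mult_phi[of "\<lambda>y. resid y * resid y"] resid_measurable integrable_resid_sq
  by (simp add: wresid_sq_def power2_eq_square mult.assoc)

lemma integrable_wresid_phi_phi:
  "k < m \<Longrightarrow> a < m \<Longrightarrow> c < m \<Longrightarrow> integrable M (\<lambda>y. wresid_phi k y * \<phi> a y * \<phi> c y)"
  using integrable_inv_wm_mult_phi[of "\<lambda>y. resid y * \<phi> k y"] resid_measurable \<phi>_measurable
    integrable_resid_mult_phi
  by (simp add: wresid_phi_def mult.assoc)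

lemma integrable_wresid_phi_sq_phi:
  assumes "k < m" "a < m" "c < m"
  shows "integrable M (\<lambda>y. wresid_phi k y * wresid_phi k y * \<phi> a y * \<phi> c y)"
proof -
  let ?g = "\<lambda>y. inv_wm y * (resid y * resid y) * \<phi> k y * \<phi> k y"
  have "integrable M ?g"
    using integrable_inv_wm_mult_phi[of "\<lambda>y. resid y * resid y"] resid_measurable integrable_resid_sq assms
    by (simp add: power2_eq_square)
  moreover have "?g \<in> borel_measurable M"
    using inv_wm_measurable resid_measurable \<phi>_measurable assms(1) by simp
  ultimately have "integrable M (\<lambda>y. inv_wm y * ?g y * \<phi> a y * \<phi> c y)"
    using integrable_inv_wm_mult_phi[OF _ _ assms(2,3)] by blast
  then show ?thesis by (simp add: wresid_phi_def mult_ac)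
qed

lemma sum_wresid_sq_phi_sq: "(\<Sum>a<m. wresid_sq y * \<phi> a y * \<phi> a y) = real m * (resid y)\<^sup>2 * (inv_wm y * wm m \<phi> y)"
  unfolding mult.assoc sum_distrib_left[symmetric] sum_phi_sq wresid_sq_def
  by (simp add: power2_eq_square mult_ac)

lemma sum_wresid_phi_phi_sq: "k < m \<Longrightarrow> (\<Sum>a<m. wresid_phi k y * \<phi> a y * \<phi> a y) = real m * (resid y * \<phi> k y)"
proof -
  assume k: "k < m"
  have "(\<Sum>a<m. wresid_phi k y * \<phi> a y * \<phi> a y) = real m * (resid y * (inv_wm y * wm m \<phi> y * \<phi> k y))"
    unfolding mult.assoc sum_distrib_left[symmetric] sum_phi_sq wresid_phi_def by (simp add: mult_ac)
  then show ?thesis using inv_wm_mult_wm_phi[OF k] by simp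
qed

lemma gammaDPP_integral_sum_wresid_sq:
  "integrable (gammaDPP M m \<phi>) (\<lambda>z. \<Sum>i<m. wresid_sq (z i))"
  "(\<integral>z. (\<Sum>i<m. wresid_sq (z i)) \<partial>gammaDPP M m \<phi>) \<le> real m * (\<integral>y. (resid y)\<^sup>2 \<partial>M)"
proof -
  note first = gammaDPP_integral_sum[OF wresid_sq_measurable integrable_wresid_sq_phi]
  show "integrable (gammaDPP M m \<phi>) (\<lambda>z. \<Sum>i<m. wresid_sq (z i))" by (rule first(1))
  have "(\<integral>z. (\<Sum>i<m. wresid_sq (z i)) \<partial>gammaDPP M m \<phi>) = (\<Sum>a<m. \<integral>y. wresid_sq y * \<phi> a y * \<phi> a y \<partial>M)"
    by (rule first(2))
  also have "\<dots> = (\<integral>y. (\<Sum>a<m. wresid_sq y * \<phi> a y * \<phi> a y) \<partial>M)"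
    using integrable_wresid_sq_phi by (subst Bochner_Integration.integral_sum) auto
  also have "\<dots> \<le> (\<integral>y. real m * (resid y)\<^sup>2 \<partial>M)"
  proof (rule integral_mono)
    show "integrable M (\<lambda>y. \<Sum>a<m. wresid_sq y * \<phi> a y * \<phi> a y)"
      using integrable_wresid_sq_phi by (intro Bochner_Integration.integrable_sum) auto
    show "integrable M (\<lambda>y. real m * (resid y)\<^sup>2)" using integrable_resid_sq by simp
    show "(\<Sum>a<m. wresid_sq y * \<phi> a y * \<phi> a y) \<le> real m * (resid y)\<^sup>2" for y
      unfolding sum_wresid_sq_phi_sq using inv_wm_mult_wm_le_1[of y]
      by (intro mult_left_le) auto
  qed
  finally show "(\<integral>z. (\<Sum>i<m. wresid_sq (z i)) \<partial>gammaDPP M m \<phi>) \<le> real m * (\<integral>y. (resid y)\<^sup>2 \<partial>M)"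
    by simp
qed

definition block_coef :: "nat \<Rightarrow> (nat \<Rightarrow> 'a) \<Rightarrow> real" where
  "block_coef k z = (1 / real m) * (\<Sum>i<m. wresid_phi k (z i))"

lemma sum_integral_wresid_phi_phi_sq: "k < m \<Longrightarrow> (\<Sum>a<m. \<integral>y. wresid_phi k y * \<phi> a y * \<phi> a y \<partial>M) = 0"
proof -
  assume k: "k < m"
  have "(\<Sum>a<m. \<integral>y. wresid_phi k y * \<phi> a y * \<phi> a y \<partial>M) = (\<integral>y. (\<Sum>a<m. wresid_phi k y * \<phi> a y * \<phi> a y) \<partial>M)"
    using integrable_wresid_phi_phi[OF k] by (subst Bochner_Integration.integral_sum) auto
  also have "\<dots> = real m * (\<integral>y. resid y * \<phi> k y \<partial>M)"
    using sum_wresid_phi_phi_sq[OF k] by simp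
  finally show ?thesis using integral_resid_mult_phi[OF k] by simp
qed

text \<open>The negative correlation of the projection DPP makes the two-point term nonpositive.\<close>

lemma block_coef_moments:
  assumes k: "k < m"
  shows "integrable (gammaDPP M m \<phi>) (block_coef k)"
    and "(\<integral>z. block_coef k z \<partial>gammaDPP M m \<phi>) = 0"
    and "integrable (gammaDPP M m \<phi>) (\<lambda>z. (block_coef k z)\<^sup>2)"
    and "(\<integral>z. (block_coef k z)\<^sup>2 \<partial>gammaDPP M m \<phi>) \<le>
      (\<Sum>a<m. \<integral>y. wresid_phi k y * wresid_phi k y * \<phi> a y * \<phi> a y \<partial>M) / (real m)\<^sup>2"
proof -
  note first = gammaDPP_integral_sum[OF wresid_phi_measurable[OF k] integrable_wresid_phi_phi[OF k]]
  note second = gammaDPP_integral_sum_sq[OF wresid_phi_measurable[OF k] integrable_wresid_phi_phi[OF k]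
      integrable_wresid_phi_sq_phi[OF k]]
  have sq: "(block_coef k z)\<^sup>2 = (\<Sum>i<m. wresid_phi k (z i))\<^sup>2 / (real m)\<^sup>2" for z
    unfolding block_coef_def by (simp add: power_mult_distrib power_divide)
  show "integrable (gammaDPP M m \<phi>) (block_coef k)"
    unfolding block_coef_def using first(1) by simp
  show "(\<integral>z. block_coef k z \<partial>gammaDPP M m \<phi>) = 0"
    unfolding block_coef_def using first(2) sum_integral_wresid_phi_phi_sq[OF k] by simp
  show "integrable (gammaDPP M m \<phi>) (\<lambda>z. (block_coef k z)\<^sup>2)"
    unfolding sq using second(1) by simp
  define U where "U a c = (\<integral>y. wresid_phi k y * \<phi> a y * \<phi> c y \<partial>M)" for a c
  have "(\<Sum>a<m. \<Sum>c<m. U a c * U c a) \<ge> 0"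
    by (intro sum_nonneg) (simp add: U_def mult_ac)
  moreover have "(\<Sum>a<m. U a a) = 0"
    unfolding U_def by (rule sum_integral_wresid_phi_phi_sq[OF k])
  ultimately show "(\<integral>z. (block_coef k z)\<^sup>2 \<partial>gammaDPP M m \<phi>) \<le>
      (\<Sum>a<m. \<integral>y. wresid_phi k y * wresid_phi k y * \<phi> a y * \<phi> a y \<partial>M) / (real m)\<^sup>2"
    unfolding sq using second(2) by (simp add: U_def divide_right_mono)
qed

lemma sum_wresid_phi_sq_phi_sq:
  "(\<Sum>k<m. \<Sum>a<m. wresid_phi k y * wresid_phi k y * \<phi> a y * \<phi> a y) =
   (real m)\<^sup>2 * (resid y)\<^sup>2 * (inv_wm y * wm m \<phi> y)\<^sup>2"
proof -
  have "(\<Sum>k<m. \<Sum>a<m. wresid_phi k y * wresid_phi k y * \<phi> a y * \<phi> a y) =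
      (inv_wm y * resid y)\<^sup>2 * (\<Sum>k<m. \<phi> k y * \<phi> k y) * (\<Sum>a<m. \<phi> a y * \<phi> a y)"
    unfolding wresid_phi_def by (simp add: sum_distrib_left sum_distrib_right power2_eq_square mult_ac)
  then show ?thesis
    unfolding sum_phi_sq by (simp add: power2_eq_square mult_ac)
qed

lemma sum_integral_block_coef_sq_le:
  "(\<Sum>k<m. \<integral>z. (block_coef k z)\<^sup>2 \<partial>gammaDPP M m \<phi>) \<le> (\<integral>y. (resid y)\<^sup>2 \<partial>M)"
proof -
  let ?F = "\<lambda>y. \<Sum>k<m. \<Sum>a<m. wresid_phi k y * wresid_phi k y * \<phi> a y * \<phi> a y"
  have int_F: "integrable M ?F"
    using integrable_wresid_phi_sq_phi by (intro Bochner_Integration.integrable_sum) auto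
  have "(\<Sum>k<m. \<integral>z. (block_coef k z)\<^sup>2 \<partial>gammaDPP M m \<phi>) \<le>
      (\<Sum>k<m. (\<Sum>a<m. \<integral>y. wresid_phi k y * wresid_phi k y * \<phi> a y * \<phi> a y \<partial>M) / (real m)\<^sup>2)"
    using block_coef_moments(4) by (intro sum_mono) auto
  also have "\<dots> = (\<integral>y. ?F y \<partial>M) / (real m)\<^sup>2"
  proof -
    have "(\<integral>y. ?F y \<partial>M) = (\<Sum>k<m. \<integral>y. (\<Sum>a<m. wresid_phi k y * wresid_phi k y * \<phi> a y * \<phi> a y) \<partial>M)"
      using integrable_wresid_phi_sq_phi
      by (intro Bochner_Integration.integral_sum Bochner_Integration.integrable_sum) auto
    also have "\<dots> = (\<Sum>k<m. \<Sum>a<m. \<integral>y. wresid_phi k y * wresid_phi k y * \<phi> a y * \<phi> a y \<partial>M)"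
      using integrable_wresid_phi_sq_phi by (intro sum.cong refl Bochner_Integration.integral_sum) auto
    finally show ?thesis by (simp add: sum_divide_distrib)
  qed
  also have "(\<integral>y. ?F y \<partial>M) \<le> (\<integral>y. (real m)\<^sup>2 * (resid y)\<^sup>2 \<partial>M)"
  proof (rule integral_mono[OF int_F])
    show "integrable M (\<lambda>y. (real m)\<^sup>2 * (resid y)\<^sup>2)" using integrable_resid_sq by simp
    show "?F y \<le> (real m)\<^sup>2 * (resid y)\<^sup>2" for y
      unfolding sum_wresid_phi_sq_phi_sq
      using inv_wm_mult_wm_le_1[of y] inv_wm_mult_wm_nonneg[of y]
      by (intro mult_left_le) (auto simp: power_le_one)
  qed
  finally show ?thesis using m_pos by (simp add: divide_right_mono)
qed

abbreviation \<Gamma> where "\<Gamma> \<equiv> PiM {..<r} (\<lambda>_. gammaDPP M m \<phi>)"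

lemma integral_emp_inner_resid:
  "integrable \<Gamma> (\<lambda>x. emp_inner x resid resid)" "(\<integral>x. emp_inner x resid resid \<partial>\<Gamma>) \<le> (\<integral>y. (resid y)\<^sup>2 \<partial>M)"
proof -
  have eq: "emp_inner x resid resid = (1 / real (m * r)) * (\<Sum>j<r. \<Sum>i<m. wresid_sq (x j i))" for x
    unfolding emp_inner_def wresid_sq_def ..
  note block = gammaDPP_integral_sum_wresid_sq
  have int: "integrable \<Gamma> (\<lambda>x. \<Sum>i<m. wresid_sq (x j i))"
    and integral: "(\<integral>x. (\<Sum>i<m. wresid_sq (x j i)) \<partial>\<Gamma>) = (\<integral>z. (\<Sum>i<m. wresid_sq (z i)) \<partial>gammaDPP M m \<phi>)"
    if "j < r" for j
    using PiM_integral_prod_components[OF prob_space_gammaDPP _ _ block(1), of "{..<r}" "{j}"] that by simp_all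
  show "integrable \<Gamma> (\<lambda>x. emp_inner x resid resid)"
    unfolding eq by (rule integrable_mult_right, rule Bochner_Integration.integrable_sum) (use int in auto)
  have "(\<integral>x. emp_inner x resid resid \<partial>\<Gamma>) =
      (1 / real (m * r)) * (real r * (\<integral>z. (\<Sum>i<m. wresid_sq (z i)) \<partial>gammaDPP M m \<phi>))"
    unfolding eq using int integral by (simp add: Bochner_Integration.integral_sum)
  also have "\<dots> \<le> (1 / real (m * r)) * (real r * (real m * (\<integral>y. (resid y)\<^sup>2 \<partial>M)))"
    using block(2) by (intro mult_left_mono) auto
  also have "\<dots> = (\<integral>y. (resid y)\<^sup>2 \<partial>M)" using m_pos r_pos by simp
  finally show "(\<integral>x. emp_inner x resid resid \<partial>\<Gamma>) \<le> (\<integral>y. (resid y)\<^sup>2 \<partial>M)" .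
qed

lemma emp_coef_eq: "emp_coef x k = (1 / real r) * (\<Sum>j<r. block_coef k (x j))"
  unfolding emp_coef_def emp_inner_def block_coef_def wresid_phi_def
  by (simp add: sum_distrib_left mult_ac)

lemma integral_sqnorm_emp_coef:
  "integrable \<Gamma> (\<lambda>x. sqnorm m (emp_coef x))" "(\<integral>x. sqnorm m (emp_coef x) \<partial>\<Gamma>) \<le> (\<integral>y. (resid y)\<^sup>2 \<partial>M) / real r"
proof -
  have eq: "sqnorm m (emp_coef x) = (\<Sum>k<m. (\<Sum>j<r. block_coef k (x j))\<^sup>2 / (real r)\<^sup>2)" for x
    unfolding sqnorm_def emp_coef_eq by (simp add: power_mult_distrib power_divide)
  note variance = PiM_integral_sq_sum_centered[OF prob_space_gammaDPP block_coef_moments(1,3,2), of _ r]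
  show "integrable \<Gamma> (\<lambda>x. sqnorm m (emp_coef x))"
    unfolding eq using variance(1) by (intro Bochner_Integration.integrable_sum integrable_divide) auto
  have "(\<integral>x. sqnorm m (emp_coef x) \<partial>\<Gamma>) = (\<Sum>k<m. real r * (\<integral>z. (block_coef k z)\<^sup>2 \<partial>gammaDPP M m \<phi>) / (real r)\<^sup>2)"
    unfolding eq using variance by (simp add: Bochner_Integration.integral_sum integrable_divide)
  also have "\<dots> = (\<Sum>k<m. \<integral>z. (block_coef k z)\<^sup>2 \<partial>gammaDPP M m \<phi>) / real r"
    using r_pos by (simp add: sum_divide_distrib power2_eq_square)
  also have "\<dots> \<le> (\<integral>y. (resid y)\<^sup>2 \<partial>M) / real r"
    using sum_integral_block_coef_sq_le by (simp add: divide_right_mono)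
  finally show "(\<integral>x. sqnorm m (emp_coef x) \<partial>\<Gamma>) \<le> (\<integral>y. (resid y)\<^sup>2 \<partial>M) / real r" .
qed

end

lemma conditional_nn_integral_le:
  fixes e B :: "'b \<Rightarrow> real"
  assumes N: "prob_space N" and S: "S \<in> sets N" and P: "measure N S > 0"
    and B: "integrable N B" "\<And>x. B x \<ge> 0" and K: "(\<integral>x. B x \<partial>N) \<le> K"
    and e: "\<And>x. x \<in> S \<Longrightarrow> e x \<le> c0 + B x" and c0: "c0 \<ge> 0"
  shows "(\<integral>\<^sup>+ x. indicator S x * ennreal (e x) \<partial>N) / ennreal (measure N S) \<le> ennreal (c0 + K / measure N S)"
proof -
  interpret prob_space N by (rule N)
  have S_int: "integrable N (indicator S :: 'b \<Rightarrow> real)"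
    using S emeasure_finite[of S] by (intro integrable_real_indicator) (auto simp: less_top[symmetric])
  have "(\<integral>\<^sup>+ x. indicator S x * ennreal (e x) \<partial>N) \<le> (\<integral>\<^sup>+ x. ennreal (c0 * indicator S x + B x) \<partial>N)"
  proof (rule nn_integral_mono)
    fix x
    show "indicator S x * ennreal (e x) \<le> ennreal (c0 * indicator S x + B x)"
      using e[of x] B(2)[of x] by (cases "x \<in> S") (auto intro: ennreal_leI)
  qed
  also have "\<dots> = ennreal (\<integral>x. c0 * indicator S x + B x \<partial>N)"
    using S_int B c0 by (intro nn_integral_eq_integral) (auto intro!: add_nonneg_nonneg)
  also have "(\<integral>x. c0 * indicator S x + B x \<partial>N) = c0 * measure N S + (\<integral>x. B x \<partial>N)"
    using S_int B S sets.sets_into_space[OF S] by (simp add: Int_absorb2)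
  finally have "(\<integral>\<^sup>+ x. indicator S x * ennreal (e x) \<partial>N) / ennreal (measure N S) \<le>
      ennreal (c0 * measure N S + (\<integral>x. B x \<partial>N)) / ennreal (measure N S)"
    by (rule divide_right_mono_ennreal)
  also have "\<dots> = ennreal (c0 + (\<integral>x. B x \<partial>N) / measure N S)"
    using P c0 B by (subst divide_ennreal) (auto intro!: add_nonneg_nonneg integral_nonneg simp: field_simps)
  also have "\<dots> \<le> ennreal (c0 + K / measure N S)"
    using K P by (intro ennreal_leI add_left_mono divide_right_mono) auto
  finally show ?thesis .
qed

context wls_problem begin

lemma conditional_wls_error_le:
  fixes c :: real
  defines "S \<equiv> {x \<in> space \<Gamma>. lambda_min (G x) \<ge> c}"
    and "err \<equiv> \<lambda>x. \<integral>y. (f y - wls_proj m r \<phi> (wm m \<phi>) x f y)\<^sup>2 \<partial>M"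
  assumes c: "c > 0" and PS: "measure \<Gamma> S > 0"
  shows "(\<integral>\<^sup>+ x. indicator S x * ennreal (err x) \<partial>\<Gamma>) / ennreal (measure \<Gamma> S)
           \<le> ennreal ((1 + inverse (measure \<Gamma> S) * inverse c) * (\<integral>y. (resid y)\<^sup>2 \<partial>M))"
    and "(\<integral>\<^sup>+ x. indicator S x * ennreal (err x) \<partial>\<Gamma>) / ennreal (measure \<Gamma> S)
           \<le> ennreal ((1 + inverse (measure \<Gamma> S) * inverse (c\<^sup>2) * inverse (real r)) * (\<integral>y. (resid y)\<^sup>2 \<partial>M))"
proof -
  have \<Gamma>: "prob_space \<Gamma>" by (intro prob_space_PiM prob_space_gammaDPP)
  have S_sets: "S \<in> sets \<Gamma>" using PS measure_notin_sets by fastforce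
  note conditional = conditional_nn_integral_le[OF \<Gamma> S_sets PS]
  have "(\<integral>\<^sup>+ x. indicator S x * ennreal (err x) \<partial>\<Gamma>) / ennreal (measure \<Gamma> S)
       \<le> ennreal ((\<integral>y. (resid y)\<^sup>2 \<partial>M) + ((\<integral>y. (resid y)\<^sup>2 \<partial>M) / c) / measure \<Gamma> S)"
    using integral_emp_inner_resid c wls_error_le(1)[of c]
    by (intro conditional[where B="\<lambda>x. emp_inner x resid resid / c"])
      (auto simp: S_def err_def emp_inner_nonneg divide_right_mono)
  then show "(\<integral>\<^sup>+ x. indicator S x * ennreal (err x) \<partial>\<Gamma>) / ennreal (measure \<Gamma> S)
           \<le> ennreal ((1 + inverse (measure \<Gamma> S) * inverse c) * (\<integral>y. (resid y)\<^sup>2 \<partial>M))"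
    by (simp add: field_simps)
  have "(\<integral>\<^sup>+ x. indicator S x * ennreal (err x) \<partial>\<Gamma>) / ennreal (measure \<Gamma> S)
       \<le> ennreal ((\<integral>y. (resid y)\<^sup>2 \<partial>M) + ((\<integral>y. (resid y)\<^sup>2 \<partial>M) / real r / c\<^sup>2) / measure \<Gamma> S)"
  proof (rule conditional[where B="\<lambda>x. sqnorm m (emp_coef x) / c\<^sup>2"])
    show "(\<integral>x. sqnorm m (emp_coef x) / c\<^sup>2 \<partial>\<Gamma>) \<le> (\<integral>y. (resid y)\<^sup>2 \<partial>M) / real r / c\<^sup>2"
      using divide_right_mono[OF integral_sqnorm_emp_coef(2), of "c\<^sup>2"] by simp
  qed (use integral_sqnorm_emp_coef c wls_error_le(2)[of c] in \<open>auto simp: S_def err_def sqnorm_nonneg\<close>)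
  then show "(\<integral>\<^sup>+ x. indicator S x * ennreal (err x) \<partial>\<Gamma>) / ennreal (measure \<Gamma> S)
           \<le> ennreal ((1 + inverse (measure \<Gamma> S) * inverse (c\<^sup>2) * inverse (real r)) * (\<integral>y. (resid y)\<^sup>2 \<partial>M))"
    by (simp add: field_simps)
qed

end

theorem mainTheorem15:
  fixes M :: "'a :: polish_space measure"
    and \<phi> :: "nat \<Rightarrow> 'a \<Rightarrow> real"
    and m r :: nat and \<delta> :: real and f :: "'a \<Rightarrow> real"
  assumes M_borel: "sets M = sets borel" and M_prob: "prob_space M"
    and m_pos: "m \<ge> 1" and r_pos: "r \<ge> 1"
    and \<phi>_L2: "\<And>k. k < m \<Longrightarrow> \<phi> k \<in> borel_measurable M \<and> integrable M (\<lambda>x. (\<phi> k x)\<^sup>2)"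
    and \<phi>_orth: "\<And>k l. k < m \<Longrightarrow> l < m \<Longrightarrow>
                  (\<integral>x. \<phi> k x * \<phi> l x \<partial>M) = (if k = l then 1 else 0)"
    and \<delta>_bounds: "0 < \<delta>" "\<delta> < 1"
    and S_pos: "measure (PiM {..<r} (\<lambda>_. gammaDPP M m \<phi>))
                  {x \<in> space (PiM {..<r} (\<lambda>_. gammaDPP M m \<phi>)).
                     lambda_min (gram m r \<phi> (wm m \<phi>) x) \<ge> 1 - \<delta>} > 0"
    and f_L2: "f \<in> borel_measurable M" "integrable M (\<lambda>x. (f x)\<^sup>2)"
  shows
   "let \<Gamma> = PiM {..<r} (\<lambda>_. gammaDPP M m \<phi>);
        S = {x \<in> space \<Gamma>. lambda_min (gram m r \<phi> (wm m \<phi>) x) \<ge> 1 - \<delta>};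
        PS = measure \<Gamma> S;
        err = (\<lambda>x. \<integral>y. (f y - wls_proj m r \<phi> (wm m \<phi>) x f y)\<^sup>2 \<partial>M);
        condE = (\<integral>\<^sup>+ x. indicator S x * ennreal (err x) \<partial>\<Gamma>) / ennreal PS;
        best = (INF g \<in> Vspace m \<phi>. \<integral>y. (f y - g y)\<^sup>2 \<partial>M)
    in condE \<le> ennreal ((1 + inverse PS * inverse (1 - \<delta>)) * best)
     \<and> condE \<le> ennreal ((1 + inverse PS * inverse ((1 - \<delta>)\<^sup>2) * inverse (real r)) * best)"
proof -
  have "orthonormal_system M \<phi> m"
    by (rule orthonormal_system.intro[OF M_prob _ _ \<phi>_orth]) (use \<phi>_L2 in blast)+
  then interpret wls_problem M \<phi> m r f
    by (rule wls_problem.intro[OF _ wls_problem_axioms.intro[OF m_pos r_pos f_L2]])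
  have "1 - \<delta> > 0" using \<delta>_bounds by simp
  from conditional_wls_error_le[OF this S_pos] show ?thesis
    unfolding Let_def best_approx_eq by (intro conjI)
qed

end
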